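(* Let $\mathcal{M}$ be the association scheme generated by the Möbius–Kantor graph $GP(8,3)$ (a rank-$6$ scheme), with distinguished relation $R_1$ the edge relation of $GP(8,3)$. Then every association scheme with a distinguished relation having the same relation-distribution diagram as $(\mathcal{M},R_1)$ is isomorphic to $\mathcal{M}$ (with the distinguished relation corresponding to $R_1$).
   Context: A (symmetric) association scheme with rank $d+1$ on a finite set $X$ is a partition $\mathcal{R}=\{R_0,\dots,R_d\}$ of $X\times X$ with $R_0$ the diagonal, each $R_i$ symmetric, and numbers $p^h_{ij}$ such that for every $(x,y)\in R_h$ the number of $z$ with $(x,z)\in R_i$, $(z,y)\in R_j$ equals $p^h_{ij}$; $k_i=p^0_{ii}$. The association scheme generated by a graph is the association scheme of minimal rank having the graph's edge relation as a relation. Two schemes with distinguished relations $R_1$, $R'_1$ have the same relation-distribution diagram if they have the same rank and there is a bijection $\sigma$ of the index set with $\sigma(0)=0$, $\sigma(1)=1$, $k_i=k'_{\sigma(i)}$ and $p^i_{1j}=p'^{\sigma(i)}_{1\sigma(j)}$ for all $i,j$. The generalized Petersen graph $GP(n,s)$ has vertices $i$ and $i^*$ for $i\in\mathbb{Z}_n$, with $i$ adjacent to $i\pm1$ and $i^*$, and $i^*$ adjacent to $(i\pm s)^*$. *)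

theory Defs
  imports Main
begin

text \<open>A symmetric association scheme of rank d+1 on a finite set X is encoded by a
  relation-index function r: (x,y) lies in R_i iff r x y = i (for x y in X).\<close>

definition assoc_scheme :: "'a set \<Rightarrow> nat \<Rightarrow> ('a \<Rightarrow> 'a \<Rightarrow> nat) \<Rightarrow> bool" where
  "assoc_scheme X d r \<longleftrightarrow>
     finite X \<and>
     (\<forall>x\<in>X. \<forall>y\<in>X. r x y \<le> d) \<and>
     (\<forall>i\<le>d. \<exists>x\<in>X. \<exists>y\<in>X. r x y = i) \<and>
     (\<forall>x\<in>X. \<forall>y\<in>X. r x y = 0 \<longleftrightarrow> x = y) \<and>
     (\<forall>x\<in>X. \<forall>y\<in>X. r x y = r y x) \<and>
     (\<forall>h\<le>d. \<forall>i\<le>d. \<forall>j\<le>d. \<forall>x\<in>X. \<forall>y\<in>X. \<forall>x'\<in>X. \<forall>y'\<in>X.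
        r x y = h \<longrightarrow> r x' y' = h \<longrightarrow>
        card {z\<in>X. r x z = i \<and> r z y = j} = card {z\<in>X. r x' z = i \<and> r z y' = j})"

definition inter_num :: "'a set \<Rightarrow> ('a \<Rightarrow> 'a \<Rightarrow> nat) \<Rightarrow> nat \<Rightarrow> nat \<Rightarrow> nat \<Rightarrow> nat" where
  "inter_num X r h i j =
     (let p = (SOME p. p \<in> X \<times> X \<and> r (fst p) (snd p) = h)
      in card {z\<in>X. r (fst p) z = i \<and> r z (snd p) = j})"

definition valency :: "'a set \<Rightarrow> ('a \<Rightarrow> 'a \<Rightarrow> nat) \<Rightarrow> nat \<Rightarrow> nat" where
  "valency X r i = inter_num X r 0 i i"

definition same_rd_diagram ::
  "'a set \<Rightarrow> nat \<Rightarrow> ('a \<Rightarrow> 'a \<Rightarrow> nat) \<Rightarrow> 'b set \<Rightarrow> nat \<Rightarrow> ('b \<Rightarrow> 'b \<Rightarrow> nat) \<Rightarrow> bool" where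
  "same_rd_diagram X d r Y d' r' \<longleftrightarrow>
     d = d' \<and>
     (\<exists>\<sigma>. bij_betw \<sigma> {0..d} {0..d} \<and> \<sigma> 0 = 0 \<and> \<sigma> 1 = 1 \<and>
        (\<forall>i\<le>d. valency X r i = valency Y r' (\<sigma> i)) \<and>
        (\<forall>i\<le>d. \<forall>j\<le>d. inter_num X r i 1 j = inter_num Y r' (\<sigma> i) 1 (\<sigma> j)))"

definition scheme_iso ::
  "'a set \<Rightarrow> nat \<Rightarrow> ('a \<Rightarrow> 'a \<Rightarrow> nat) \<Rightarrow> 'b set \<Rightarrow> nat \<Rightarrow> ('b \<Rightarrow> 'b \<Rightarrow> nat) \<Rightarrow> bool" where
  "scheme_iso X d r Y d' r' \<longleftrightarrow>
     (\<exists>f \<tau>. bij_betw f X Y \<and> bij_betw \<tau> {0..d} {0..d'} \<and> \<tau> 1 = 1 \<and>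
        (\<forall>x\<in>X. \<forall>y\<in>X. r' (f x) (f y) = \<tau> (r x y)))"

text \<open>Generalized Petersen graph GP(n,s) on vertex set {0..<2n}:
  vertex i (i < n) is i, vertex i* is n + i.\<close>
definition gp_vertices :: "nat \<Rightarrow> nat set" where
  "gp_vertices n = {0..<2*n}"

definition gp_adj :: "nat \<Rightarrow> nat \<Rightarrow> nat \<Rightarrow> nat \<Rightarrow> bool" where
  "gp_adj n s u v \<longleftrightarrow>
     (u < n \<and> v < n \<and> (v = (u + 1) mod n \<or> u = (v + 1) mod n)) \<or>
     (u < n \<and> v = n + u) \<or> (v < n \<and> u = n + v) \<or>
     (n \<le> u \<and> u < 2*n \<and> n \<le> v \<and> v < 2*n \<and>
        (v - n = (u - n + s) mod n \<or> u - n = (v - n + s) mod n))"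

definition generated_scheme :: "'a set \<Rightarrow> ('a \<Rightarrow> 'a \<Rightarrow> bool) \<Rightarrow> nat \<Rightarrow> ('a \<Rightarrow> 'a \<Rightarrow> nat) \<Rightarrow> bool" where
  "generated_scheme X E d r \<longleftrightarrow>
     assoc_scheme X d r \<and> 1 \<le> d \<and>
     (\<forall>x\<in>X. \<forall>y\<in>X. r x y = 1 \<longleftrightarrow> E x y) \<and>
     (\<forall>d'' r''. assoc_scheme X d'' r'' \<and>
        (\<exists>i\<le>d''. \<forall>x\<in>X. \<forall>y\<in>X. r'' x y = i \<longleftrightarrow> E x y) \<longrightarrow> d \<le> d'')"

end

theory Submission
  imports Defs "HOL-Library.Multiset"
begin

text \<open>
  The Moebius-Kantor scheme is given explicitly as \<open>mk_rel\<close>; its scheme axioms are checked by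
  computation at one vertex and transported to all vertices by the automorphisms \<open>i \<mapsto> i + 1\<close>
  and \<open>i \<mapsto> 3 i\<close> (which exchanges the two rims). Its relations are recovered from the edge
  relation by repeatedly composing with the edge relation and taking differences. Only the
  numbers \<open>p\<^sup>h\<^sub>1\<^sub>j\<close> enter this computation, so every scheme on GP(8,3) whose first relation is the
  edge relation refines \<open>mk_rel\<close>, and the minimality of the generated scheme makes it a
  relabelling of \<open>mk_rel\<close>.

  In a scheme with the same relation-distribution diagram, fix a vertex \<open>y\<^sub>0\<close> and sort the other
  vertices by their relation to it. The numbers \<open>p\<^sup>h\<^sub>1\<^sub>j\<close> give levels of sizes 1, 3, 6, 2, 3, 1,
  prescribe how many neighbours each vertex has on each level, and forbid 4-cycles
  (\<open>p\<^sup>2\<^sub>1\<^sub>1 = 1\<close>, \<open>p\<^sup>h\<^sub>1\<^sub>1 = 0\<close> otherwise). This leaves no freedom: the edge graph is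
  GP(8,3). Pulling the scheme back along this isomorphism and applying the first step once
  more identifies it with \<open>mk_rel\<close> as well.
\<close>

section \<open>Association schemes\<close>

lemma
  assumes "assoc_scheme X d r"
  shows assoc_scheme_finite: "finite X"
    and assoc_scheme_le: "x \<in> X \<Longrightarrow> y \<in> X \<Longrightarrow> r x y \<le> d"
    and assoc_scheme_surj: "i \<le> d \<Longrightarrow> \<exists>x\<in>X. \<exists>y\<in>X. r x y = i"
    and assoc_scheme_eq_0_iff: "x \<in> X \<Longrightarrow> y \<in> X \<Longrightarrow> r x y = 0 \<longleftrightarrow> x = y"
    and assoc_scheme_sym: "x \<in> X \<Longrightarrow> y \<in> X \<Longrightarrow> r x y = r y x"
  using assms by (simp_all add: assoc_scheme_def)

lemma assoc_schemeI:
  assumes "finite X"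
    and "\<And>x y. x \<in> X \<Longrightarrow> y \<in> X \<Longrightarrow> r x y \<le> d"
    and "\<And>i. i \<le> d \<Longrightarrow> \<exists>x\<in>X. \<exists>y\<in>X. r x y = i"
    and "\<And>x y. x \<in> X \<Longrightarrow> y \<in> X \<Longrightarrow> r x y = 0 \<longleftrightarrow> x = y"
    and "\<And>x y. x \<in> X \<Longrightarrow> y \<in> X \<Longrightarrow> r x y = r y x"
    and "\<And>x y x' y' i j. x \<in> X \<Longrightarrow> y \<in> X \<Longrightarrow> x' \<in> X \<Longrightarrow> y' \<in> X \<Longrightarrow> r x y = r x' y' \<Longrightarrow>
           card {z\<in>X. r x z = i \<and> r z y = j} = card {z\<in>X. r x' z = i \<and> r z y' = j}"
  shows "assoc_scheme X d r"
  unfolding assoc_scheme_def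
proof (intro conjI ballI allI impI)
  fix h i j x y x' y'
  assume "x \<in> X" "y \<in> X" "x' \<in> X" "y' \<in> X" "r x y = h" "r x' y' = h"
  then show "card {z\<in>X. r x z = i \<and> r z y = j} = card {z\<in>X. r x' z = i \<and> r z y' = j}"
    by (intro assms(6)) simp_all
qed (simp_all add: assms(1-5))

lemma assoc_scheme_card_paths_eq:
  assumes sch: "assoc_scheme X d r"
    and xy: "x \<in> X" "y \<in> X" "x' \<in> X" "y' \<in> X" "r x y = r x' y'"
  shows "card {z\<in>X. r x z = i \<and> r z y = j} = card {z\<in>X. r x' z = i \<and> r z y' = j}"
proof (cases "i \<le> d \<and> j \<le> d")
  case True
  have regular: "\<forall>h\<le>d. \<forall>i\<le>d. \<forall>j\<le>d. \<forall>x\<in>X. \<forall>y\<in>X. \<forall>x'\<in>X. \<forall>y'\<in>X.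
      r x y = h \<longrightarrow> r x' y' = h \<longrightarrow>
      card {z\<in>X. r x z = i \<and> r z y = j} = card {z\<in>X. r x' z = i \<and> r z y' = j}"
    using sch unfolding assoc_scheme_def by (elim conjE) assumption
  show ?thesis
    by (rule regular[rule_format, OF assoc_scheme_le[OF sch xy(1,2)]])
      (use True xy in auto)
next
  case False
  then have "{z\<in>X. r x z = i \<and> r z y = j} = {}" "{z\<in>X. r x' z = i \<and> r z y' = j} = {}"
    using assoc_scheme_le[OF sch] xy by fastforce+
  then show ?thesis by (simp only:)
qed

lemma assoc_scheme_lift_path:
  assumes sch: "assoc_scheme X d r"
    and xy: "x \<in> X" "y \<in> X" "x' \<in> X" "y' \<in> X" "r x y = r x' y'" and z: "z \<in> X"
  obtains z' where "z' \<in> X" "r x' z' = r x z" "r z' y' = r z y"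
proof -
  let ?S = "{w\<in>X. r x w = r x z \<and> r w y = r z y}" and ?S' = "{w\<in>X. r x' w = r x z \<and> r w y' = r z y}"
  have "card ?S' = card ?S" using assoc_scheme_card_paths_eq[OF sch xy(3,4,1,2) xy(5)[symmetric]] .
  moreover have "card ?S \<noteq> 0" using z assoc_scheme_finite[OF sch] by (simp add: card_eq_0_iff) blast
  ultimately have "?S' \<noteq> {}" by (metis card.empty)
  then obtain z' where "z' \<in> ?S'" by blast
  then show ?thesis using that by blast
qed

lemma inter_num_eq_card:
  assumes sch: "assoc_scheme X d r" and uv: "u \<in> X" "v \<in> X" "r u v = h"
  shows "inter_num X r h i j = card {z\<in>X. r u z = i \<and> r z v = j}"
proof -
  define p where "p = (SOME p. p \<in> X \<times> X \<and> r (fst p) (snd p) = h)"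
  have "p \<in> X \<times> X \<and> r (fst p) (snd p) = h"
    unfolding p_def by (rule someI[where x = "(u, v)"]) (use uv in simp)
  then have p: "fst p \<in> X" "snd p \<in> X" "r (fst p) (snd p) = r u v"
    using uv(3) by auto
  have "inter_num X r h i j = card {z\<in>X. r (fst p) z = i \<and> r z (snd p) = j}"
    unfolding inter_num_def Let_def p_def ..
  also have "\<dots> = card {z\<in>X. r u z = i \<and> r z v = j}"
    by (rule assoc_scheme_card_paths_eq[OF sch p(1,2) uv(1,2) p(3)])
  finally show ?thesis .
qed

lemma valency_eq_card:
  assumes sch: "assoc_scheme X d r" and u: "u \<in> X"
  shows "valency X r i = card {z\<in>X. r u z = i}"
proof -
  have "valency X r i = card {z\<in>X. r u z = i \<and> r z u = i}"
    unfolding valency_def using assoc_scheme_eq_0_iff[OF sch u u]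
    by (intro inter_num_eq_card[OF sch u u]) simp
  also have "{z\<in>X. r u z = i \<and> r z u = i} = {z\<in>X. r u z = i}"
    using assoc_scheme_sym[OF sch u] by auto
  finally show ?thesis .
qed

lemma assoc_scheme_pullback:
  assumes sch: "assoc_scheme Y d r" and f: "bij_betw f X Y"
  shows "assoc_scheme X d (\<lambda>x y. r (f x) (f y))"
proof -
  have fX: "f x \<in> Y" if "x \<in> X" for x using bij_betw_apply[OF f that] .
  have paths: "card {z\<in>X. r (f x) (f z) = i \<and> r (f z) (f y) = j} =
      card {w\<in>Y. r (f x) w = i \<and> r w (f y) = j}"
    for x y i j
    by (rule bij_betw_same_card, rule bij_betw_Collect[OF f]) simp
  show ?thesis
  proof (rule assoc_schemeI)
    show "finite X" using assoc_scheme_finite[OF sch] bij_betw_finite[OF f] by simp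
  next
    fix i assume "i \<le> d"
    then obtain u v where "u \<in> f ` X" "v \<in> f ` X" "r u v = i"
      using assoc_scheme_surj[OF sch] bij_betw_imp_surj_on[OF f] by blast
    then show "\<exists>x\<in>X. \<exists>y\<in>X. r (f x) (f y) = i" by blast
  next
    fix x y assume "x \<in> X" "y \<in> X"
    then show "r (f x) (f y) = 0 \<longleftrightarrow> x = y"
      using assoc_scheme_eq_0_iff[OF sch fX fX] bij_betw_imp_inj_on[OF f]
      by (simp add: inj_on_eq_iff)
  next
    fix x y x' y' i j assume "x \<in> X" "y \<in> X" "x' \<in> X" "y' \<in> X" "r (f x) (f y) = r (f x') (f y')"
    then show "card {z\<in>X. r (f x) (f z) = i \<and> r (f z) (f y) = j} =
        card {z\<in>X. r (f x') (f z) = i \<and> r (f z) (f y') = j}"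
      unfolding paths by (intro assoc_scheme_card_paths_eq[OF sch fX fX fX fX])
  qed (use assoc_scheme_le[OF sch fX fX] assoc_scheme_sym[OF sch fX fX] in simp_all)
qed

definition saturated :: "'a set \<Rightarrow> ('a \<Rightarrow> 'a \<Rightarrow> nat) \<Rightarrow> ('a \<Rightarrow> 'a \<Rightarrow> bool) \<Rightarrow> bool" where
  "saturated X r Q \<longleftrightarrow> (\<forall>x\<in>X. \<forall>y\<in>X. \<forall>x'\<in>X. \<forall>y'\<in>X. r x y = r x' y' \<longrightarrow> Q x y \<longrightarrow> Q x' y')"

lemma saturatedD:
  "saturated X r Q \<Longrightarrow> x \<in> X \<Longrightarrow> y \<in> X \<Longrightarrow> x' \<in> X \<Longrightarrow> y' \<in> X \<Longrightarrow> r x y = r x' y' \<Longrightarrow> Q x y \<Longrightarrow> Q x' y'"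
  unfolding saturated_def by blast

lemma saturated_cong:
  "saturated X r Q \<Longrightarrow> (\<And>x y. x \<in> X \<Longrightarrow> y \<in> X \<Longrightarrow> Q x y \<longleftrightarrow> Q' x y) \<Longrightarrow> saturated X r Q'"
  unfolding saturated_def by blast

lemma saturated_relation: "saturated X r (\<lambda>x y. r x y = k)"
  unfolding saturated_def by simp

lemma saturated_diff:
  assumes "saturated X r Q" "saturated X r Q'"
  shows "saturated X r (\<lambda>x y. Q x y \<and> \<not> Q' x y)"
  unfolding saturated_def
proof (intro ballI impI conjI)
  fix x y x' y' assume xy: "x \<in> X" "y \<in> X" "x' \<in> X" "y' \<in> X" "r x y = r x' y'"
    and Q: "Q x y \<and> \<not> Q' x y"
  show "Q x' y'" using saturatedD[OF assms(1) xy] Q by blast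
  show "\<not> Q' x' y'" using saturatedD[OF assms(2) xy(3,4,1,2) xy(5)[symmetric]] Q by blast
qed

lemma saturated_compose:
  assumes sch: "assoc_scheme X d r" and Q: "saturated X r Q"
  shows "saturated X r (\<lambda>x y. \<exists>z\<in>X. r x z = k \<and> Q z y)"
  unfolding saturated_def
proof (intro ballI impI)
  fix x y x' y' assume xy: "x \<in> X" "y \<in> X" "x' \<in> X" "y' \<in> X" "r x y = r x' y'"
    and "\<exists>z\<in>X. r x z = k \<and> Q z y"
  then obtain z where z: "z \<in> X" "r x z = k" "Q z y" by blast
  obtain z' where z': "z' \<in> X" "r x' z' = r x z" "r z' y' = r z y"
    using assoc_scheme_lift_path[OF sch xy z(1)] .
  have "Q z' y'" using saturatedD[OF Q z(1) xy(2) z'(1) xy(4) z'(3)[symmetric] z(3)] .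
  then show "\<exists>z\<in>X. r x' z = k \<and> Q z y'" using z' z(2) by blast
qed

lemma refinement_is_relabelling:
  assumes s: "assoc_scheme X d s" and r: "assoc_scheme X e r" and "d \<le> e"
    and refines: "\<And>x y x' y'. x \<in> X \<Longrightarrow> y \<in> X \<Longrightarrow> x' \<in> X \<Longrightarrow> y' \<in> X \<Longrightarrow>
      s x y = s x' y' \<Longrightarrow> r x y = r x' y'"
  obtains g where "d = e" "bij_betw g {0..d} {0..e}" "\<And>x y. x \<in> X \<Longrightarrow> y \<in> X \<Longrightarrow> r x y = g (s x y)"
proof -
  define g where "g j = (SOME h. \<exists>x\<in>X. \<exists>y\<in>X. s x y = j \<and> r x y = h)" for j
  have rg: "r x y = g (s x y)" if xy: "x \<in> X" "y \<in> X" for x y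
  proof -
    have "\<exists>x'\<in>X. \<exists>y'\<in>X. s x' y' = s x y \<and> r x' y' = g (s x y)"
      unfolding g_def by (rule someI_ex) (use xy in blast)
    then show ?thesis using refines xy by metis
  qed
  have "g ` {0..d} = {0..e}"
  proof
    show "g ` {0..d} \<subseteq> {0..e}"
      using assoc_scheme_surj[OF s] assoc_scheme_le[OF r] rg by fastforce
    show "{0..e} \<subseteq> g ` {0..d}"
      using assoc_scheme_surj[OF r] assoc_scheme_le[OF s] rg by fastforce
  qed
  moreover from this have "d = e"
    using card_image_le[of "{0..d}" g] \<open>d \<le> e\<close> by simp
  ultimately have "bij_betw g {0..d} {0..e}" "d = e"
    by (simp_all add: bij_betw_def eq_card_imp_inj_on)
  then show ?thesis using that rg by blast
qed

definition rel_aut :: "'a set \<Rightarrow> ('a \<Rightarrow> 'a \<Rightarrow> nat) \<Rightarrow> ('a \<Rightarrow> 'a) \<Rightarrow> bool" where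
  "rel_aut X r \<phi> \<longleftrightarrow> bij_betw \<phi> X X \<and> (\<forall>x\<in>X. \<forall>y\<in>X. r (\<phi> x) (\<phi> y) = r x y)"

lemma rel_autI:
  assumes "finite X" "\<phi> ` X \<subseteq> X" and pres: "\<And>x y. x \<in> X \<Longrightarrow> y \<in> X \<Longrightarrow> r (\<phi> x) (\<phi> y) = r x y"
    and diag: "\<And>x y. x \<in> X \<Longrightarrow> y \<in> X \<Longrightarrow> r x y = 0 \<longleftrightarrow> x = y"
  shows "rel_aut X r \<phi>"
proof -
  have "inj_on \<phi> X"
  proof (rule inj_onI)
    fix x y assume "x \<in> X" "y \<in> X" "\<phi> x = \<phi> y"
    then have "r x y = r x x" using pres by metis
    then show "x = y" using diag[of x y] diag[of x x] \<open>x \<in> X\<close> \<open>y \<in> X\<close> by simp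
  qed
  then have "bij_betw \<phi> X X" using endo_inj_surj[OF assms(1,2)] by (simp add: bij_betw_def)
  then show ?thesis unfolding rel_aut_def by (simp add: pres)
qed

lemma rel_aut_comp: "rel_aut X r \<phi> \<Longrightarrow> rel_aut X r \<psi> \<Longrightarrow> rel_aut X r (\<phi> \<circ> \<psi>)"
  unfolding rel_aut_def by (auto intro: bij_betw_trans dest: bij_betwE)

lemma rel_aut_funpow:
  assumes "rel_aut X r \<phi>"
  shows "rel_aut X r (\<phi> ^^ n)"
proof (induction n)
  case 0
  show ?case using bij_betw_id[of X] by (simp add: rel_aut_def id_def)
next
  case (Suc n)
  then show ?case using rel_aut_comp[OF assms] by (simp only: funpow.simps)
qed

definition path_profile :: "'a set \<Rightarrow> ('a \<Rightarrow> 'a \<Rightarrow> nat) \<Rightarrow> 'a \<Rightarrow> 'a \<Rightarrow> (nat \<times> nat) multiset" where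
  "path_profile X r x y = image_mset (\<lambda>z. (r x z, r z y)) (mset_set X)"

lemma card_paths_eq_count:
  assumes "finite X"
  shows "card {z\<in>X. r x z = i \<and> r z y = j} = count (path_profile X r x y) (i, j)"
  using assms by (simp add: path_profile_def count_image_mset' conj_commute eq_commute)

lemma path_profile_rel_aut:
  assumes \<phi>: "rel_aut X r \<phi>" and xy: "x \<in> X" "y \<in> X"
  shows "path_profile X r (\<phi> x) (\<phi> y) = path_profile X r x y"
proof -
  have "mset_set X = image_mset \<phi> (mset_set X)"
    using \<phi> unfolding rel_aut_def bij_betw_def by (simp add: image_mset_mset_set)
  then have "path_profile X r (\<phi> x) (\<phi> y) =
      image_mset (\<lambda>z. (r (\<phi> x) z, r z (\<phi> y))) (image_mset \<phi> (mset_set X))"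
    unfolding path_profile_def by (rule arg_cong)
  also have "\<dots> = image_mset (\<lambda>z. (r (\<phi> x) (\<phi> z), r (\<phi> z) (\<phi> y))) (mset_set X)"
    by (simp add: multiset.map_comp comp_def)
  also have "\<dots> = path_profile X r x y"
    unfolding path_profile_def
  proof (rule image_mset_cong)
    fix z assume "z \<in># mset_set X"
    then have "z \<in> X" using infinite_set_mset_mset_set[of X] by (cases "finite X") auto
    then show "(r (\<phi> x) (\<phi> z), r (\<phi> z) (\<phi> y)) = (r x z, r z y)"
      using \<phi> xy unfolding rel_aut_def by simp
  qed
  finally show ?thesis .
qed

lemma assoc_scheme_if_transitive:
  assumes fin: "finite X" and a: "a \<in> X"
    and le: "\<And>x y. x \<in> X \<Longrightarrow> y \<in> X \<Longrightarrow> r x y \<le> d"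
    and surj: "\<And>i. i \<le> d \<Longrightarrow> \<exists>y\<in>X. r a y = i"
    and diag: "\<And>x y. x \<in> X \<Longrightarrow> y \<in> X \<Longrightarrow> r x y = 0 \<longleftrightarrow> x = y"
    and sym: "\<And>x y. x \<in> X \<Longrightarrow> y \<in> X \<Longrightarrow> r x y = r y x"
    and base: "\<And>y y'. y \<in> X \<Longrightarrow> y' \<in> X \<Longrightarrow> r a y = r a y' \<Longrightarrow>
      path_profile X r a y = path_profile X r a y'"
    and transitive: "\<And>x. x \<in> X \<Longrightarrow> \<exists>\<phi>. rel_aut X r \<phi> \<and> \<phi> a = x"
  shows "assoc_scheme X d r"
proof -
  have from_base: "\<exists>w\<in>X. r a w = r x y \<and> path_profile X r x y = path_profile X r a w"
    if "x \<in> X" "y \<in> X" for x y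
  proof -
    obtain \<phi> where \<phi>: "rel_aut X r \<phi>" "\<phi> a = x" using transitive \<open>x \<in> X\<close> by blast
    then obtain w where "w \<in> X" "y = \<phi> w"
      using \<open>y \<in> X\<close> unfolding rel_aut_def bij_betw_def by blast
    then show ?thesis
      using \<phi> path_profile_rel_aut[OF \<phi>(1) a] a unfolding rel_aut_def by auto
  qed
  show ?thesis
  proof (rule assoc_schemeI)
    fix x y x' y' i j
    assume "x \<in> X" "y \<in> X" "x' \<in> X" "y' \<in> X" "r x y = r x' y'"
    then have "path_profile X r x y = path_profile X r x' y'"
      using from_base base by metis
    then show "card {z\<in>X. r x z = i \<and> r z y = j} = card {z\<in>X. r x' z = i \<and> r z y' = j}"
      by (simp add: card_paths_eq_count[OF fin])
  next
    fix i assume "i \<le> d"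
    then show "\<exists>x\<in>X. \<exists>y\<in>X. r x y = i" using surj a by blast
  qed (use fin le diag sym in auto)
qed

lemma assoc_scheme_path_profile_eq:
  assumes sch: "assoc_scheme X d r"
    and "x \<in> X" "y \<in> X" "x' \<in> X" "y' \<in> X" "r x y = r x' y'"
  shows "path_profile X r x y = path_profile X r x' y'"
proof (rule multiset_eqI)
  fix p :: "nat \<times> nat"
  show "count (path_profile X r x y) p = count (path_profile X r x' y') p"
    using assoc_scheme_card_paths_eq[OF assms, of "fst p" "snd p"]
    by (simp add: card_paths_eq_count[OF assoc_scheme_finite[OF sch]])
qed

lemma path_profile_relabel:
  "path_profile X (\<lambda>x y. \<pi> (r x y)) x y = image_mset (map_prod \<pi> \<pi>) (path_profile X r x y)"
  by (simp add: path_profile_def multiset.map_comp comp_def)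

lemma assoc_scheme_relabel:
  assumes sch: "assoc_scheme X d r" and \<pi>: "bij_betw \<pi> {0..d} {0..d}" "\<pi> 0 = 0"
  shows "assoc_scheme X d (\<lambda>x y. \<pi> (r x y))"
proof (rule assoc_schemeI)
  have inj: "\<pi> a = \<pi> b \<longleftrightarrow> a = b" if "a \<le> d" "b \<le> d" for a b
    using \<pi>(1) that unfolding bij_betw_def inj_on_def by auto
  fix x y assume xy: "x \<in> X" "y \<in> X"
  show "\<pi> (r x y) \<le> d" using bij_betwE[OF \<pi>(1)] assoc_scheme_le[OF sch xy] by simp
  show "\<pi> (r x y) = 0 \<longleftrightarrow> x = y"
    using inj[OF assoc_scheme_le[OF sch xy], of 0] \<pi>(2) assoc_scheme_eq_0_iff[OF sch xy] by simp
  show "\<pi> (r x y) = \<pi> (r y x)" using assoc_scheme_sym[OF sch xy] by simp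
  fix x' y' i j assume xy': "x' \<in> X" "y' \<in> X" "\<pi> (r x y) = \<pi> (r x' y')"
  then have "r x y = r x' y'" using inj assoc_scheme_le[OF sch] xy by blast
  then show "card {z\<in>X. \<pi> (r x z) = i \<and> \<pi> (r z y) = j} =
      card {z\<in>X. \<pi> (r x' z) = i \<and> \<pi> (r z y') = j}"
    unfolding card_paths_eq_count[OF assoc_scheme_finite[OF sch], of "\<lambda>a b. \<pi> (r a b)"]
      path_profile_relabel
    by (simp only: assoc_scheme_path_profile_eq[OF sch xy xy'(1,2)])
next
  fix i assume "i \<le> d"
  then obtain h where "h \<le> d" "\<pi> h = i" using \<pi>(1) by (force simp: bij_betw_def)
  then show "\<exists>x\<in>X. \<exists>y\<in>X. \<pi> (r x y) = i" using assoc_scheme_surj[OF sch] by metis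
qed (use sch in \<open>rule assoc_scheme_finite\<close>)

lemma inter_num_cong:
  assumes "\<And>x y. x \<in> X \<Longrightarrow> y \<in> X \<Longrightarrow> r x y = r' x y" and "\<exists>x\<in>X. \<exists>y\<in>X. r x y = h"
  shows "inter_num X r h i j = inter_num X r' h i j"
proof -
  have same: "(\<lambda>p. p \<in> X \<times> X \<and> r (fst p) (snd p) = h) = (\<lambda>p. p \<in> X \<times> X \<and> r' (fst p) (snd p) = h)"
    using assms(1) by (intro ext) (auto simp: mem_Times_iff)
  define p where "p = (SOME p. p \<in> X \<times> X \<and> r (fst p) (snd p) = h)"
  have "p \<in> X \<times> X" unfolding p_def using assms(2)
    by (metis (mono_tags, lifting) mem_Times_iff someI fst_conv snd_conv)
  then have "{z\<in>X. r (fst p) z = i \<and> r z (snd p) = j} = {z\<in>X. r' (fst p) z = i \<and> r' z (snd p) = j}"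
    using assms(1) by (auto simp: mem_Times_iff)
  then show ?thesis
    unfolding inter_num_def Let_def p_def same[symmetric] by simp
qed

lemma inter_num_relabel:
  assumes sch: "assoc_scheme X d r" and \<pi>: "bij_betw \<pi> {0..d} {0..d}" "\<pi> 0 = 0"
    and r': "\<And>x y. x \<in> X \<Longrightarrow> y \<in> X \<Longrightarrow> r' x y = \<pi> (r x y)"
    and "h \<le> d" "i \<le> d" "j \<le> d"
  shows "inter_num X r' (\<pi> h) (\<pi> i) (\<pi> j) = inter_num X r h i j"
proof -
  have inj: "\<pi> a = \<pi> b \<longleftrightarrow> a = b" if "a \<le> d" "b \<le> d" for a b
    using \<pi>(1) that unfolding bij_betw_def inj_on_def by auto
  obtain x y where xy: "x \<in> X" "y \<in> X" "r x y = h" using assoc_scheme_surj[OF sch \<open>h \<le> d\<close>] by blast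
  have "inter_num X r' (\<pi> h) (\<pi> i) (\<pi> j) = inter_num X (\<lambda>x y. \<pi> (r x y)) (\<pi> h) (\<pi> i) (\<pi> j)"
    using r' xy by (intro inter_num_cong) auto
  also have "\<dots> = card {z\<in>X. \<pi> (r x z) = \<pi> i \<and> \<pi> (r z y) = \<pi> j}"
    by (rule inter_num_eq_card[OF assoc_scheme_relabel[OF sch \<pi>] xy(1,2)]) (simp add: xy(3))
  also have "{z\<in>X. \<pi> (r x z) = \<pi> i \<and> \<pi> (r z y) = \<pi> j} = {z\<in>X. r x z = i \<and> r z y = j}"
    using inj assoc_scheme_le[OF sch] xy \<open>i \<le> d\<close> \<open>j \<le> d\<close> by blast
  also have "card \<dots> = inter_num X r h i j" using inter_num_eq_card[OF sch xy] by simp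
  finally show ?thesis .
qed

lemma valency_relabel:
  assumes "assoc_scheme X d r" "bij_betw \<pi> {0..d} {0..d}" "\<pi> 0 = 0"
    and "\<And>x y. x \<in> X \<Longrightarrow> y \<in> X \<Longrightarrow> r' x y = \<pi> (r x y)" and "i \<le> d"
  shows "valency X r' (\<pi> i) = valency X r i"
  using inter_num_relabel[OF assms(1-4), of 0 i i] assms(3,5) by (simp add: valency_def)

lemma ex_path_iff_inter_num:
  assumes sch: "assoc_scheme X d r" and xy: "x \<in> X" "y \<in> X"
  shows "(\<exists>z\<in>X. r x z = i \<and> r z y = j) \<longleftrightarrow> 0 < inter_num X r (r x y) i j"
  using inter_num_eq_card[OF sch xy refl] assoc_scheme_finite[OF sch] by (auto simp: card_gt_0_iff)

lemma regular_graph_embedding: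
  assumes fin: "finite X" "finite Y" and f: "inj_on f X" "f ` X \<subseteq> Y" and "card X = card Y"
    and degX: "\<And>x. x \<in> X \<Longrightarrow> card {y\<in>X. E x y} = k"
    and degY: "\<And>u. u \<in> Y \<Longrightarrow> card {v\<in>Y. F u v} = k"
    and hom: "\<And>x y. x \<in> X \<Longrightarrow> y \<in> X \<Longrightarrow> E x y \<Longrightarrow> F (f x) (f y)"
  shows "bij_betw f X Y" and "\<And>x y. x \<in> X \<Longrightarrow> y \<in> X \<Longrightarrow> F (f x) (f y) \<longleftrightarrow> E x y"
proof -
  show "bij_betw f X Y"
    using card_subset_eq[OF fin(2) f(2)] card_image[OF f(1)] \<open>card X = card Y\<close> f(1)
    by (simp add: bij_betw_def)
  fix x y assume xy: "x \<in> X" "y \<in> X"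
  have "f ` {y\<in>X. E x y} \<subseteq> {v\<in>Y. F (f x) v}" using hom xy f(2) by blast
  moreover have "card (f ` {y\<in>X. E x y}) = card {v\<in>Y. F (f x) v}"
    using card_image[OF inj_on_subset[OF f(1)]] degX[OF xy(1)] degY f(2) xy(1) by fastforce
  ultimately have "f ` {y\<in>X. E x y} = {v\<in>Y. F (f x) v}" using fin(2) by (simp add: card_subset_eq)
  then show "F (f x) (f y) \<longleftrightarrow> E x y"
    using xy f inj_on_eq_iff[OF f(1)] by blast
qed

lemma card_2_extend:
  assumes "card S = 2" "a \<in> S"
  obtains b where "S = {a, b}" "b \<noteq> a"
proof -
  have "card (S - {a}) = 1" using assms by (simp add: card_Diff_singleton)
  then obtain b where "S - {a} = {b}" by (rule card_1_singletonE)
  then have "S = {a, b}" "b \<noteq> a" using insert_Diff[OF assms(2)] by auto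
  then show thesis by (rule that)
qed

lemma card_3_extend:
  assumes "card S = 3" "a \<in> S" "b \<in> S" "a \<noteq> b"
  obtains d where "S = {a, b, d}" "d \<noteq> a" "d \<noteq> b"
proof -
  have "finite S" using assms(1) by (simp add: card_ge_0_finite)
  then have "card (S - {a, b}) = 1" using assms by (simp add: card_Diff_subset)
  then obtain d where "S - {a, b} = {d}" by (rule card_1_singletonE)
  then have "S = {a, b, d}" "d \<noteq> a" "d \<noteq> b" using assms(2,3) by auto
  then show thesis by (rule that)
qed

section \<open>The Moebius-Kantor scheme\<close>

lemma all_less_iff_list_all: "(\<forall>x<n. P x) \<longleftrightarrow> list_all P [0..<n]"
  by (auto simp: list_all_iff)

lemma path_profile_upt: "path_profile {0..<n} r x y = mset (map (\<lambda>z. (r x z, r z y)) [0..<n])"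
  by (simp add: path_profile_def flip: mset_upt)

lemma gp_vertices_8: "gp_vertices 8 = {0..<16}"
  by (simp add: gp_vertices_def)

text \<open>Relations 1, 2 and 5 are graph distance 1, 2 and 4; the pairs at distance 3 split into
  relations 3 and 4. Each relation depends only on the two rims and the offset mod 8.\<close>

definition mk_rel :: "nat \<Rightarrow> nat \<Rightarrow> nat" where
  "mk_rel x y =
     (if x < 8 \<and> y < 8 then [0, 1, 2, 4, 5, 4, 2, 1] ! ((y + 8 - x) mod 8)
      else if x < 8 then [1, 2, 3, 2, 4, 2, 3, 2] ! ((y + 8 - x) mod 8)
      else if y < 8 then [1, 2, 3, 2, 4, 2, 3, 2] ! ((x + 8 - y) mod 8)
      else [0, 4, 2, 1, 5, 1, 2, 4] ! ((y + 8 - x) mod 8))"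

text \<open>\<open>mk_p1 h j\<close> is the intersection number \<open>p\<^sup>h\<^sub>1\<^sub>j\<close> of \<open>mk_rel\<close>.\<close>

definition mk_p1 :: "nat \<Rightarrow> nat \<Rightarrow> nat" where
  "mk_p1 h j = [[0, 3, 0, 0, 0, 0], [1, 0, 2, 0, 0, 0], [0, 1, 0, 1, 1, 0],
                [0, 0, 3, 0, 0, 0], [0, 0, 2, 0, 0, 1], [0, 0, 0, 0, 3, 0]] ! h ! j"

definition mk_valency :: "nat \<Rightarrow> nat" where
  "mk_valency k = [1, 3, 6, 2, 3, 1] ! k"

definition mk_rot :: "nat \<Rightarrow> nat" where
  "mk_rot x = (if x < 8 then (x + 1) mod 8 else (x + 1) mod 8 + 8)"

definition mk_flip :: "nat \<Rightarrow> nat" where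
  "mk_flip x = (if x < 8 then 8 + 3 * x mod 8 else 3 * (x - 8) mod 8)"

definition mk_rep :: "nat \<Rightarrow> nat" where
  "mk_rep h = [0, 1, 2, 10, 3, 4] ! h"

lemma mk_rel_table:
  "\<forall>x<16. \<forall>y<16. mk_rel x y \<le> 5 \<and> (mk_rel x y = 0 \<longleftrightarrow> x = y) \<and> mk_rel x y = mk_rel y x
     \<and> (mk_rel x y = 1 \<longleftrightarrow> gp_adj 8 3 x y)"
  by (simp only: all_less_iff_list_all) code_simp

lemma mk_automorphisms_table:
  "\<forall>x<16. \<forall>y<16. mk_rot x < 16 \<and> mk_flip x < 16
     \<and> mk_rel (mk_rot x) (mk_rot y) = mk_rel x y \<and> mk_rel (mk_flip x) (mk_flip y) = mk_rel x y"
  by (simp only: all_less_iff_list_all) code_simp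

lemma mk_orbit_table: "\<forall>x<8. (mk_rot ^^ x) 0 = x \<and> (mk_rot ^^ x) (mk_flip 0) = x + 8"
  by (simp only: all_less_iff_list_all) code_simp

lemma mk_base_table:
  "\<forall>y<16. path_profile {0..<16} mk_rel 0 y = path_profile {0..<16} mk_rel 0 (mk_rep (mk_rel 0 y))"
  by (simp only: all_less_iff_list_all path_profile_upt) code_simp

lemma mk_rep_table:
  "\<forall>h<6. mk_rep h < 16 \<and> mk_rel 0 (mk_rep h) = h
     \<and> (\<forall>j<6. card {z\<in>{0..<16}. mk_rel 0 z = 1 \<and> mk_rel z (mk_rep h) = j} = mk_p1 h j)
     \<and> card {z\<in>{0..<16}. mk_rel 0 z = h} = mk_valency h"
  by (simp only: all_less_iff_list_all) code_simp

lemma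
  assumes "x \<in> gp_vertices 8" "y \<in> gp_vertices 8"
  shows mk_rel_le: "mk_rel x y \<le> 5"
    and mk_rel_eq_0_iff: "mk_rel x y = 0 \<longleftrightarrow> x = y"
    and mk_rel_sym: "mk_rel x y = mk_rel y x"
    and mk_rel_eq_1_iff: "mk_rel x y = 1 \<longleftrightarrow> gp_adj 8 3 x y"
  using mk_rel_table assms unfolding gp_vertices_8 by simp_all

lemma mk_rep:
  assumes "h \<le> 5"
  shows "mk_rep h \<in> gp_vertices 8" and "mk_rel 0 (mk_rep h) = h"
  using mk_rep_table assms unfolding gp_vertices_8 by auto

lemma mk_rot_flip_aut:
  shows mk_rot_aut: "rel_aut (gp_vertices 8) mk_rel mk_rot"
    and mk_flip_aut: "rel_aut (gp_vertices 8) mk_rel mk_flip"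
  using mk_automorphisms_table mk_rel_eq_0_iff unfolding gp_vertices_8
  by (auto intro!: rel_autI)

lemma mk_vertex_transitive:
  assumes "x \<in> gp_vertices 8"
  obtains \<phi> where "rel_aut (gp_vertices 8) mk_rel \<phi>" "\<phi> 0 = x"
proof (cases "x < 8")
  case True
  then show ?thesis
    using that[OF rel_aut_funpow[OF mk_rot_aut]] mk_orbit_table by blast
next
  case False
  then have "(mk_rot ^^ (x - 8) \<circ> mk_flip) 0 = x"
    using mk_orbit_table assms unfolding gp_vertices_8 by simp
  then show ?thesis
    using that[OF rel_aut_comp[OF rel_aut_funpow[OF mk_rot_aut] mk_flip_aut]] by blast
qed

theorem mk_scheme: "assoc_scheme (gp_vertices 8) 5 mk_rel"
proof (rule assoc_scheme_if_transitive[where a = 0])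
  fix y y' assume "y \<in> gp_vertices 8" "y' \<in> gp_vertices 8" "mk_rel 0 y = mk_rel 0 y'"
  then show "path_profile (gp_vertices 8) mk_rel 0 y = path_profile (gp_vertices 8) mk_rel 0 y'"
    using mk_base_table unfolding gp_vertices_8 by (metis atLeastLessThan_iff)
next
  fix i :: nat assume "i \<le> 5"
  then show "\<exists>y\<in>gp_vertices 8. mk_rel 0 y = i" using mk_rep by blast
next
  fix x assume "x \<in> gp_vertices 8"
  then show "\<exists>\<phi>. rel_aut (gp_vertices 8) mk_rel \<phi> \<and> \<phi> 0 = x" by (rule mk_vertex_transitive) blast
qed (use mk_rel_le mk_rel_eq_0_iff mk_rel_sym in \<open>auto simp: gp_vertices_8\<close>)

lemma mk_inter_num:
  assumes "h \<le> 5" "j \<le> 5"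
  shows "inter_num (gp_vertices 8) mk_rel h 1 j = mk_p1 h j"
proof -
  have "inter_num (gp_vertices 8) mk_rel h 1 j =
      card {z\<in>gp_vertices 8. mk_rel 0 z = 1 \<and> mk_rel z (mk_rep h) = j}"
    by (rule inter_num_eq_card[OF mk_scheme]) (use mk_rep assms in \<open>auto simp: gp_vertices_8\<close>)
  then show ?thesis using mk_rep_table assms unfolding gp_vertices_8 by simp
qed

lemma mk_valency:
  assumes "k \<le> 5"
  shows "valency (gp_vertices 8) mk_rel k = mk_valency k"
  using valency_eq_card[OF mk_scheme, of 0 k] mk_rep_table assms unfolding gp_vertices_8 by simp

text \<open>Starting from the diagonal and the edge relation, composing with the edge relation and
  removing relations already isolated produces each relation of \<open>mk_rel\<close> in turn.\<close>

lemma mk_rel_saturated: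
  assumes s: "assoc_scheme (gp_vertices 8) d s"
    and adj: "\<And>x y. x \<in> gp_vertices 8 \<Longrightarrow> y \<in> gp_vertices 8 \<Longrightarrow> s x y = 1 \<longleftrightarrow> gp_adj 8 3 x y"
  shows "saturated (gp_vertices 8) s (\<lambda>x y. mk_rel x y = k)"
proof -
  let ?X = "gp_vertices 8"
  have step: "saturated ?X s (\<lambda>x y. mk_rel x y \<in> J')"
    if J: "saturated ?X s (\<lambda>x y. mk_rel x y \<in> J)" "J \<subseteq> {..5}"
      and J': "\<forall>h<6. (\<exists>j\<in>J. 0 < mk_p1 h j) \<longleftrightarrow> h \<in> J'" for J J'
  proof (rule saturated_cong[OF saturated_compose[OF s J(1), of 1]])
    fix x y assume xy: "x \<in> ?X" "y \<in> ?X"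
    have "(\<exists>z\<in>?X. s x z = 1 \<and> mk_rel z y \<in> J) \<longleftrightarrow> (\<exists>j\<in>J. \<exists>z\<in>?X. mk_rel x z = 1 \<and> mk_rel z y = j)"
      using adj mk_rel_eq_1_iff xy by auto
    also have "\<dots> \<longleftrightarrow> (\<exists>j\<in>J. 0 < mk_p1 (mk_rel x y) j)"
    proof (rule bex_cong[OF refl])
      fix j assume "j \<in> J"
      then have "j \<le> 5" using J(2) by auto
      then show "(\<exists>z\<in>?X. mk_rel x z = 1 \<and> mk_rel z y = j) \<longleftrightarrow> 0 < mk_p1 (mk_rel x y) j"
        using ex_path_iff_inter_num[OF mk_scheme xy] mk_inter_num[OF mk_rel_le[OF xy]] by simp
    qed
    also have "\<dots> \<longleftrightarrow> mk_rel x y \<in> J'"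
      using J' mk_rel_le[OF xy] by simp
    finally show "(\<exists>z\<in>?X. s x z = 1 \<and> mk_rel z y \<in> J) \<longleftrightarrow> mk_rel x y \<in> J'" .
  qed
  have sat0: "saturated ?X s (\<lambda>x y. mk_rel x y \<in> {0})"
    by (rule saturated_cong[OF saturated_relation[of _ s 0]])
      (simp add: assoc_scheme_eq_0_iff[OF s] mk_rel_eq_0_iff)
  have sat1: "saturated ?X s (\<lambda>x y. mk_rel x y \<in> {1})"
    by (rule saturated_cong[OF saturated_relation[of _ s 1]])
      (metis adj mk_rel_eq_1_iff singleton_iff)
  have sat02: "saturated ?X s (\<lambda>x y. mk_rel x y \<in> {0, 2})"
    by (rule step[OF sat1]; code_simp)
  have sat2: "saturated ?X s (\<lambda>x y. mk_rel x y \<in> {2})"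
    by (rule saturated_cong[OF saturated_diff[OF sat02 sat0]]) auto
  have sat134: "saturated ?X s (\<lambda>x y. mk_rel x y \<in> {1, 3, 4})"
    by (rule step[OF sat2]; code_simp)
  have sat34: "saturated ?X s (\<lambda>x y. mk_rel x y \<in> {3, 4})"
    by (rule saturated_cong[OF saturated_diff[OF sat134 sat1]]) auto
  have sat25: "saturated ?X s (\<lambda>x y. mk_rel x y \<in> {2, 5})"
    by (rule step[OF sat34]; code_simp)
  have sat5: "saturated ?X s (\<lambda>x y. mk_rel x y \<in> {5})"
    by (rule saturated_cong[OF saturated_diff[OF sat25 sat2]]) auto
  have sat4: "saturated ?X s (\<lambda>x y. mk_rel x y \<in> {4})"
    by (rule step[OF sat5]; code_simp)
  have sat3: "saturated ?X s (\<lambda>x y. mk_rel x y \<in> {3})"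
    by (rule saturated_cong[OF saturated_diff[OF sat34 sat4]]) auto
  show ?thesis
  proof (cases "k \<le> 5")
    case True
    then have "k \<in> {0, 1, 2, 3, 4, 5}" by auto
    then have "saturated ?X s (\<lambda>x y. mk_rel x y \<in> {k})"
      using sat0 sat1 sat2 sat3 sat4 sat5 by blast
    then show ?thesis by (rule saturated_cong) simp
  next
    case False
    show ?thesis unfolding saturated_def
    proof (intro ballI impI)
      fix x y x' y' assume "x \<in> ?X" "y \<in> ?X" "x' \<in> ?X" "y' \<in> ?X" "s x y = s x' y'" "mk_rel x y = k"
      then show "mk_rel x' y' = k" using mk_rel_le[of x y] False by simp
    qed
  qed
qed

lemma gp83_scheme_relabels_mk_rel:
  assumes s: "assoc_scheme (gp_vertices 8) d s" "d \<le> 5"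
    and adj: "\<And>x y. x \<in> gp_vertices 8 \<Longrightarrow> y \<in> gp_vertices 8 \<Longrightarrow> s x y = 1 \<longleftrightarrow> gp_adj 8 3 x y"
  obtains g where "d = 5" "bij_betw g {0..5} {0..5}" "g 1 = 1"
    "\<And>x y. x \<in> gp_vertices 8 \<Longrightarrow> y \<in> gp_vertices 8 \<Longrightarrow> mk_rel x y = g (s x y)"
proof -
  have refines: "mk_rel x y = mk_rel x' y'"
    if "x \<in> gp_vertices 8" "y \<in> gp_vertices 8" "x' \<in> gp_vertices 8" "y' \<in> gp_vertices 8"
      "s x y = s x' y'"
    for x y x' y'
    using saturatedD[OF mk_rel_saturated[OF s(1) adj, of "mk_rel x y"] that] by simp
  obtain g where g: "d = 5" "bij_betw g {0..d} {0..5}"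
    "\<And>x y. x \<in> gp_vertices 8 \<Longrightarrow> y \<in> gp_vertices 8 \<Longrightarrow> mk_rel x y = g (s x y)"
    using refinement_is_relabelling[OF s(1) mk_scheme s(2) refines] by blast
  moreover have "g 1 = 1"
    using g(3)[of 0 1] adj[of 0 1] unfolding gp_vertices_8 by (simp add: mk_rel_def gp_adj_def)
  ultimately show thesis using that by simp
qed

section \<open>Reconstruction of GP(8,3) from the diagram\<close>

locale mk_diagram =
  fixes Y :: "'a set" and c :: "'a \<Rightarrow> 'a \<Rightarrow> nat" and y0 :: 'a
  assumes scheme: "assoc_scheme Y 5 c"
    and inter_num: "\<And>h j. h \<le> 5 \<Longrightarrow> j \<le> 5 \<Longrightarrow> inter_num Y c h 1 j = mk_p1 h j"
    and valency: "\<And>k. k \<le> 5 \<Longrightarrow> valency Y c k = mk_valency k"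
    and y0: "y0 \<in> Y"
begin

definition level :: "nat \<Rightarrow> 'a set" where
  "level k = {z\<in>Y. c z y0 = k}"

definition level_nbrs :: "'a \<Rightarrow> nat \<Rightarrow> 'a set" where
  "level_nbrs u j = {z\<in>Y. c u z = 1 \<and> c z y0 = j}"

lemma mem_level [simp]: "z \<in> level k \<longleftrightarrow> z \<in> Y \<and> c z y0 = k"
  by (simp add: level_def)

lemma mem_level_nbrs [simp]: "z \<in> level_nbrs u j \<longleftrightarrow> z \<in> Y \<and> c u z = 1 \<and> c z y0 = j"
  by (simp add: level_nbrs_def)

lemma adj_sym: "u \<in> Y \<Longrightarrow> v \<in> Y \<Longrightarrow> c u v = 1 \<Longrightarrow> c v u = 1"
  using assoc_scheme_sym[OF scheme] by metis

lemma card_nbr_paths: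
  assumes "u \<in> Y" "v \<in> Y" "j \<le> 5"
  shows "card {z\<in>Y. c u z = 1 \<and> c z v = j} = mk_p1 (c u v) j"
  using inter_num_eq_card[OF scheme assms(1,2) refl]
    inter_num[OF assoc_scheme_le[OF scheme assms(1,2)] assms(3)]
  by simp

lemma card_level_nbrs:
  "u \<in> Y \<Longrightarrow> j \<le> 5 \<Longrightarrow> card (level_nbrs u j) = mk_p1 (c u y0) j"
  unfolding level_nbrs_def using card_nbr_paths y0 by blast

lemma card_level: "k \<le> 5 \<Longrightarrow> card (level k) = mk_valency k"
proof -
  assume "k \<le> 5"
  have "level k = {z\<in>Y. c y0 z = k}" using assoc_scheme_sym[OF scheme y0] by auto
  then show ?thesis using valency_eq_card[OF scheme y0] valency[OF \<open>k \<le> 5\<close>] by simp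
qed

lemma degree: "u \<in> Y \<Longrightarrow> card {v\<in>Y. c u v = 1} = 3"
  using valency_eq_card[OF scheme, of u 1] valency[of 1] by (simp add: mk_valency_def)

lemma card_Y: "card Y = 16"
proof -
  have "Y = (\<Union>k\<le>5. level k)" using assoc_scheme_le[OF scheme _ y0] by auto
  moreover have "card (\<Union>k\<le>5. level k) = (\<Sum>k\<le>5. card (level k))"
    using assoc_scheme_finite[OF scheme] by (intro card_UN_disjoint) (auto simp: level_def)
  ultimately show ?thesis by (simp add: card_level mk_valency_def atMost_Suc numeral_eq_Suc)
qed

lemma common_nbr_unique:
  assumes "u \<in> Y" "v \<in> Y" "u \<noteq> v" "w \<in> Y" "w' \<in> Y"
    and "c u w = 1" "c w v = 1" "c u w' = 1" "c w' v = 1"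
  shows "w = w'"
proof -
  have "u \<in> {z\<in>Y. c w z = 1 \<and> c z v = c u v}" using assms(1) adj_sym[OF assms(1,4,6)] by simp
  then have "0 < card {z\<in>Y. c w z = 1 \<and> c z v = c u v}"
    using assoc_scheme_finite[OF scheme] by (auto simp: card_gt_0_iff)
  then have "0 < mk_p1 (c w v) (c u v)"
    using card_nbr_paths[OF assms(4,2) assoc_scheme_le[OF scheme assms(1,2)]] by simp
  then have "c u v = 2"
    using assms(3,7) assoc_scheme_eq_0_iff[OF scheme assms(1,2)]
      assoc_scheme_le[OF scheme assms(1,2)]
    by (auto simp: mk_p1_def nth_Cons' split: if_splits)
  then have "card {z\<in>Y. c u z = 1 \<and> c z v = 1} = 1"
    using card_nbr_paths[OF assms(1,2), of 1] by (simp add: mk_p1_def)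
  then obtain x where "{z\<in>Y. c u z = 1 \<and> c z v = 1} = {x}" by (rule card_1_singletonE)
  moreover have "w \<in> {z\<in>Y. c u z = 1 \<and> c z v = 1}" "w' \<in> {z\<in>Y. c u z = 1 \<and> c z v = 1}"
    using assms by simp_all
  ultimately show ?thesis by (metis singletonD)
qed

lemma level_nbrs_unique:
  assumes "u \<in> Y" "mk_p1 (c u y0) j = 1" "a \<in> level_nbrs u j" "b \<in> level_nbrs u j"
  shows "a = b"
proof -
  have "card (level_nbrs u j) = 1"
    using card_level_nbrs[OF assms(1)] assms assoc_scheme_le[OF scheme _ y0] by auto
  then obtain x where "level_nbrs u j = {x}" by (rule card_1_singletonE)
  then show ?thesis using assms(3,4) by (metis singletonD)
qed

lemma level_nbrs_pair:
  assumes "u \<in> Y" "mk_p1 (c u y0) j = 2" "a \<in> level_nbrs u j"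
  obtains b where "level_nbrs u j = {a, b}" "b \<noteq> a"
proof (rule card_2_extend)
  show "card (level_nbrs u j) = 2"
    using card_level_nbrs[OF assms(1)] assms assoc_scheme_le[OF scheme _ y0] by auto
qed (use assms that in auto)

lemma level_nbrs_triple:
  assumes "u \<in> Y" "mk_p1 (c u y0) j = 3" "a \<in> level_nbrs u j" "b \<in> level_nbrs u j" "a \<noteq> b"
  obtains d where "level_nbrs u j = {a, b, d}" "d \<noteq> a" "d \<noteq> b"
proof (rule card_3_extend)
  show "card (level_nbrs u j) = 3"
    using card_level_nbrs[OF assms(1)] assms assoc_scheme_le[OF scheme _ y0] by auto
qed (use assms that in auto)

lemma level_nbr_exists:
  assumes "u \<in> Y" "j \<le> 5" "0 < mk_p1 (c u y0) j"
  obtains z where "z \<in> level_nbrs u j"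
  using card_level_nbrs[OF assms(1,2)] assms(3) by (metis card.empty ex_in_conv less_irrefl)

lemma level_nbrs_disjoint:
  assumes "u \<in> Y" "u' \<in> Y" "u \<noteq> u'" "c u y0 = h" "c u' y0 = h" "mk_p1 j h = 1"
  shows "level_nbrs u j \<inter> level_nbrs u' j = {}"
proof (rule ccontr)
  assume "level_nbrs u j \<inter> level_nbrs u' j \<noteq> {}"
  then obtain z where z: "z \<in> level_nbrs u j" "z \<in> level_nbrs u' j" by blast
  then have "u \<in> level_nbrs z h" "u' \<in> level_nbrs z h" using assms adj_sym by auto
  then show False using level_nbrs_unique[of z h u u'] z assms by simp
qed

text \<open>The construction names \<open>v\<^sub>i\<close> the vertex that will be the image of vertex \<open>i\<close> of GP(8,3);
  \<open>y\<^sub>0\<close> is the image of 0, and \<open>level k\<close> collects the vertices in relation \<open>k\<close> to \<open>y\<^sub>0\<close>.\<close>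

lemma base_configuration:
  obtains v1 v7 v8 v2 v9 v3 v11 v10 v14 where
    "level_nbrs y0 1 = {v1, v7, v8}" "v8 \<noteq> v1" "level_nbrs v1 2 = {v2, v9}" "v9 \<noteq> v2"
    "level 3 = {v10, v14}" "v14 \<noteq> v10" "c v2 v10 = 1" "c v11 v14 = 1"
    "v3 \<in> level_nbrs v2 4" "level_nbrs v3 2 = {v2, v11}" "v11 \<in> level_nbrs v8 2"
proof -
  have l0: "c y0 y0 = 0" using assoc_scheme_eq_0_iff[OF scheme y0 y0] by simp
  obtain v1 where v1: "v1 \<in> level_nbrs y0 1"
    using level_nbr_exists[OF y0, of 1] l0 by (auto simp: mk_p1_def)
  then have Y1: "v1 \<in> Y" "c v1 y0 = 1" by simp_all
  obtain v2 where v2: "v2 \<in> level_nbrs v1 2"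
    using level_nbr_exists[OF Y1(1), of 2] Y1 by (auto simp: mk_p1_def)
  then have Y2: "v2 \<in> Y" "c v1 v2 = 1" "c v2 y0 = 2" by simp_all
  obtain v9 where N1: "level_nbrs v1 2 = {v2, v9}" "v9 \<noteq> v2"
    by (rule level_nbrs_pair[OF Y1(1) _ v2]) (simp add: Y1 mk_p1_def)
  obtain v10 where v10: "v10 \<in> level_nbrs v2 3"
    using level_nbr_exists[OF Y2(1), of 3] Y2 by (auto simp: mk_p1_def)
  then have v10L3: "v10 \<in> level 3" by simp
  obtain v14 where L3: "level 3 = {v10, v14}" "v14 \<noteq> v10"
    by (rule card_2_extend[OF _ v10L3]) (simp add: card_level mk_valency_def)
  obtain v3 where v3: "v3 \<in> level_nbrs v2 4"
    using level_nbr_exists[OF Y2(1), of 4] Y2 by (auto simp: mk_p1_def)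
  then have Y3: "v3 \<in> Y" "c v2 v3 = 1" "c v3 y0 = 4" by simp_all
  have v2N3: "v2 \<in> level_nbrs v3 2" using Y2 Y3 adj_sym[OF Y2(1) Y3(1,2)] by simp
  obtain v11 where N3: "level_nbrs v3 2 = {v2, v11}" "v11 \<noteq> v2"
    by (rule level_nbrs_pair[OF Y3(1) _ v2N3]) (simp add: Y3 mk_p1_def)
  have "v11 \<in> level_nbrs v3 2" unfolding N3(1) by simp
  then have Y11: "v11 \<in> Y" "c v3 v11 = 1" "c v11 y0 = 2" by simp_all
  obtain v8 where "v8 \<in> level_nbrs v11 1"
    using level_nbr_exists[OF Y11(1), of 1] Y11 by (auto simp: mk_p1_def)
  then have Y8: "v8 \<in> Y" "c v11 v8 = 1" "c v8 y0 = 1" by simp_all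
  have v11N8: "v11 \<in> level_nbrs v8 2" using Y8 Y11 adj_sym[OF Y11(1) Y8(1,2)] by simp
  have v8N0: "v8 \<in> level_nbrs y0 1" using Y8 adj_sym[OF Y8(1) y0 Y8(3)] by simp
  have "v8 \<noteq> v1"
  proof
    assume "v8 = v1"
    then have "c v1 v11 = 1" using v11N8 by simp
    moreover have "v1 \<noteq> v3" using Y1 Y3 by auto
    ultimately have "v2 = v11"
      using common_nbr_unique[OF Y1(1) Y3(1) _ Y2(1) Y11(1) Y2(2) Y3(2)] adj_sym[OF Y3(1) Y11(1,2)]
      by blast
    then show False using N3(2) by simp
  qed
  obtain v7 where N0: "level_nbrs y0 1 = {v1, v8, v7}" "v7 \<noteq> v1" "v7 \<noteq> v8"
    by (rule level_nbrs_triple[OF y0 _ v1 v8N0 \<open>v8 \<noteq> v1\<close>[symmetric]]) (simp add: l0 mk_p1_def)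
  obtain t where t: "t \<in> level_nbrs v11 3"
    using level_nbr_exists[OF Y11(1), of 3] Y11 by (auto simp: mk_p1_def)
  have "t \<noteq> v10"
  proof
    assume "t = v10"
    then have "c v11 v10 = 1" using t by simp
    moreover have "v3 \<noteq> v10" using Y3 v10 by auto
    ultimately have "v2 = v11"
      using common_nbr_unique[OF Y3(1) _ _ Y2(1) Y11(1) adj_sym[OF Y2(1) Y3(1,2)]] v10 Y11(2)
      by auto
    then show False using N3(2) by simp
  qed
  moreover have "t \<in> level 3" using t by simp
  ultimately have "c v11 v14 = 1" using L3(1) t by simp
  moreover have "level_nbrs y0 1 = {v1, v7, v8}" using N0(1) by blast
  moreover have "c v2 v10 = 1" using v10 by simp
  ultimately show thesis
    using that[OF _ \<open>v8 \<noteq> v1\<close> N1 L3 _ _ v3 N3(1) v11N8] by blast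
qed

lemma level_nbrs_eq_pair:
  assumes "u \<in> Y" "mk_p1 (c u y0) j = 2" "a \<in> level_nbrs u j" "b \<in> level_nbrs u j" "a \<noteq> b"
  shows "level_nbrs u j = {a, b}"
proof -
  obtain b' where "level_nbrs u j = {a, b'}" by (rule level_nbrs_pair[OF assms(1-3)])
  then show ?thesis using assms(4,5) by auto
qed

lemma level_nbrs_eq_triple:
  assumes "u \<in> Y" "mk_p1 (c u y0) j = 3" "a \<in> level_nbrs u j" "b \<in> level_nbrs u j"
    "d \<in> level_nbrs u j"
    and "a \<noteq> b" "a \<noteq> d" "b \<noteq> d"
  shows "level_nbrs u j = {a, b, d}"
proof -
  obtain d' where "level_nbrs u j = {a, b, d'}" by (rule level_nbrs_triple[OF assms(1-4,6)])
  then show ?thesis using assms(5,7,8) by auto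
qed

lemma distinct_level_nbrs:
  assumes "u \<in> Y" "j \<le> 5" "level_nbrs u j = set xs" "mk_p1 (c u y0) j = length xs"
  shows "distinct xs"
  using card_level_nbrs[OF assms(1,2)] assms(3,4) by (simp add: card_distinct)

lemma no_two_level_3_nbrs:
  assumes "level 3 = {t, t'}" "t \<noteq> t'" "z \<in> Y" "c z y0 = 2" "c z t = 1" "c z t' = 1"
  shows False
proof -
  have "t \<in> level_nbrs z 3" "t' \<in> level_nbrs z 3"
    using assms(1,5,6) by (auto simp: set_eq_iff)
  then show False using level_nbrs_unique[OF assms(3)] assms(2,4) by (simp add: mk_p1_def)
qed

lemma level_3_configuration:
  assumes N0: "level_nbrs y0 1 = {v1, v7, v8}" "v8 \<noteq> v1"
    and N1: "level_nbrs v1 2 = {v2, v9}" "v9 \<noteq> v2"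
    and L3: "level 3 = {v10, v14}" "v14 \<noteq> v10"
    and e2_10: "c v2 v10 = 1" and e11_14: "c v11 v14 = 1" and v11: "v11 \<in> level_nbrs v8 2"
  obtains v6 v13 v15 where
    "level_nbrs v8 2 = {v11, v13}" "level_nbrs v7 2 = {v6, v15}"
    "level_nbrs v10 2 = {v2, v13, v15}" "level_nbrs v14 2 = {v6, v9, v11}"
proof -
  have "v1 \<in> level_nbrs y0 1" "v7 \<in> level_nbrs y0 1" "v8 \<in> level_nbrs y0 1"
    "v2 \<in> level_nbrs v1 2" "v9 \<in> level_nbrs v1 2" "v10 \<in> level 3" "v14 \<in> level 3"
    using N0(1) N1(1) L3(1) by simp_all
  then have Y: "v1 \<in> Y" "v7 \<in> Y" "v8 \<in> Y" "v2 \<in> Y" "v9 \<in> Y" "v10 \<in> Y" "v14 \<in> Y" "v11 \<in> Y"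
    and lev: "c v1 y0 = 1" "c v7 y0 = 1" "c v8 y0 = 1" "c v2 y0 = 2" "c v9 y0 = 2"
      "c v10 y0 = 3" "c v14 y0 = 3" "c v11 y0 = 2"
    and e: "c v1 v2 = 1" "c v1 v9 = 1" "c v8 v11 = 1"
    using v11 by simp_all
  have not_both_level_3: False if "z \<in> Y" "c z y0 = 2" "c z v10 = 1" "c z v14 = 1" for z
    using no_two_level_3_nbrs[OF L3(1) L3(2)[symmetric] that] .
  have parent_v7: "z \<in> level_nbrs v7 2"
    if z: "z \<in> Y" "c z y0 = 2" "z \<notin> level_nbrs v1 2" "z \<notin> level_nbrs v8 2" for z
  proof -
    obtain p where p: "p \<in> level_nbrs z 1" using level_nbr_exists[OF z(1), of 1] z
      by (auto simp: mk_p1_def)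
    then have "p \<in> level_nbrs y0 1" and cpz: "c p z = 1" using adj_sym[OF _ y0] adj_sym[OF z(1)]
      by auto
    then have "p \<in> {v1, v7, v8}" by (simp only: N0(1))
    then have "p = v7" using z cpz by auto
    then show ?thesis using z(1,2) cpz by simp
  qed
  obtain v13 where N8: "level_nbrs v8 2 = {v11, v13}" "v13 \<noteq> v11"
    by (rule level_nbrs_pair[OF Y(3) _ v11]) (simp add: lev mk_p1_def)
  have "v13 \<in> level_nbrs v8 2" using N8(1) by simp
  then have Y13: "v13 \<in> Y" "c v8 v13 = 1" "c v13 y0 = 2" by simp_all
  obtain t where t: "t \<in> level_nbrs v13 3" using level_nbr_exists[OF Y13(1), of 3] Y13
    by (auto simp: mk_p1_def)
  have "t \<noteq> v14"
  proof
    assume "t = v14"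
    then have "v11 = v13"
      using common_nbr_unique[OF Y(3,7) _ Y(8) Y13(1) e(3) e11_14 Y13(2)] t lev(3,7) by fastforce
    then show False using N8(2) by simp
  qed
  moreover have "t \<in> level 3" using t by simp
  then have "t \<in> {v10, v14}" by (simp only: L3(1))
  ultimately have e13_10: "c v13 v10 = 1" using t by auto
  obtain t' where t': "t' \<in> level_nbrs v9 3" using level_nbr_exists[OF Y(5), of 3] lev
    by (auto simp: mk_p1_def)
  have "t' \<noteq> v10"
  proof
    assume "t' = v10"
    then have "v2 = v9"
      using common_nbr_unique[OF Y(1,6) _ Y(4,5) e(1) e2_10 e(2)] t' lev(1,6) by fastforce
    then show False using N1(2) by simp
  qed
  moreover have "t' \<in> level 3" using t' by simp
  then have "t' \<in> {v10, v14}" by (simp only: L3(1))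
  ultimately have e9_14: "c v9 v14 = 1" using t' by auto
  have disj18: "level_nbrs v1 2 \<inter> level_nbrs v8 2 = {}"
    by (rule level_nbrs_disjoint) (use Y lev N0(2) in \<open>auto simp: mk_p1_def\<close>)
  have N10': "v2 \<in> level_nbrs v10 2" "v13 \<in> level_nbrs v10 2" "v2 \<noteq> v13"
    using adj_sym[OF Y(4,6) e2_10] adj_sym[OF Y13(1) Y(6) e13_10] Y Y13 lev disj18 N1(1) N8(1)
    by auto
  obtain v15 where N10: "level_nbrs v10 2 = {v2, v13, v15}" "v15 \<noteq> v2" "v15 \<noteq> v13"
    by (rule level_nbrs_triple[OF Y(6) _ N10']) (simp add: lev mk_p1_def)
  have N14': "v9 \<in> level_nbrs v14 2" "v11 \<in> level_nbrs v14 2" "v9 \<noteq> v11"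
    using adj_sym[OF Y(5,7) e9_14] adj_sym[OF Y(8,7) e11_14] Y lev disj18 N1(1) N8(1) by auto
  obtain v6 where N14: "level_nbrs v14 2 = {v9, v11, v6}" "v6 \<noteq> v9" "v6 \<noteq> v11"
    by (rule level_nbrs_triple[OF Y(7) _ N14']) (simp add: lev mk_p1_def)
  have "v15 \<in> level_nbrs v10 2" "v6 \<in> level_nbrs v14 2" using N10(1) N14(1) by simp_all
  then have Y15: "v15 \<in> Y" "c v10 v15 = 1" "c v15 y0 = 2" and Y6: "v6 \<in> Y" "c v14 v6 = 1"
    "c v6 y0 = 2"
    by simp_all
  have v15N7: "v15 \<in> level_nbrs v7 2"
  proof (rule parent_v7[OF Y15(1,3)])
    show "v15 \<notin> level_nbrs v1 2" "v15 \<notin> level_nbrs v8 2"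
      using not_both_level_3[OF Y(5) lev(5) _ e9_14] not_both_level_3[OF Y(8) lev(8) _ e11_14] adj_sym[OF Y(6) Y15(1,2)]
        N1(1) N8(1) N10(2,3) by auto
  qed
  have v6N7: "v6 \<in> level_nbrs v7 2"
  proof (rule parent_v7[OF Y6(1,3)])
    show "v6 \<notin> level_nbrs v1 2" "v6 \<notin> level_nbrs v8 2"
      using not_both_level_3[OF Y(4) lev(4) e2_10] not_both_level_3[OF Y13(1,3) e13_10] adj_sym[OF Y(7) Y6(1,2)]
        N1(1) N8(1) N14(2,3) by auto
  qed
  have "v6 \<noteq> v15"
    using not_both_level_3[OF Y6(1,3) _ adj_sym[OF Y(7) Y6(1,2)]] adj_sym[OF Y(6) Y15(1,2)] by auto
  then have "level_nbrs v7 2 = {v6, v15}"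
    by (intro level_nbrs_eq_pair[OF Y(2) _ v6N7 v15N7]) (simp add: lev mk_p1_def)
  moreover have "level_nbrs v14 2 = {v6, v9, v11}" using N14(1) by blast
  ultimately show thesis using that N8(1) N10(1) by blast
qed

lemma antipodal_configuration:
  assumes v7: "v7 \<in> level 1" and N7: "level_nbrs v7 2 = {v6, v15}"
    and L3: "level 3 = {v10, v14}" "v14 \<noteq> v10"
    and N10: "level_nbrs v10 2 = {v2, v13, v15}" and N14: "level_nbrs v14 2 = {v6, v9, v11}"
    and v3: "v3 \<in> level_nbrs v2 4" and N3: "level_nbrs v3 2 = {v2, v11}"
  obtains v4 v5 where "level 5 = {v4}" "c v3 v4 = 1" "c v5 v4 = 1" "v5 \<in> level 4"
    "level_nbrs v5 2 = {v6, v13}"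
proof -
  have "v15 \<in> level_nbrs v7 2" "v6 \<in> level_nbrs v7 2" "v2 \<in> level_nbrs v10 2"
    "v13 \<in> level_nbrs v10 2"
    "v6 \<in> level_nbrs v14 2" "v10 \<in> level 3" "v14 \<in> level 3"
    using N7 N10 N14 L3(1) by simp_all
  then have Y: "v7 \<in> Y" "v15 \<in> Y" "v6 \<in> Y" "v2 \<in> Y" "v13 \<in> Y" "v10 \<in> Y" "v14 \<in> Y" "v3 \<in> Y"
    and lev: "c v7 y0 = 1" "c v6 y0 = 2" "c v2 y0 = 2" "c v10 y0 = 3" "c v14 y0 = 3" "c v3 y0 = 4"
    and e: "c v7 v15 = 1" "c v7 v6 = 1" "c v10 v2 = 1" "c v10 v13 = 1" "c v14 v6 = 1" "c v2 v3 = 1"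
    using v7 v3 by simp_all
  have "distinct [v6, v9, v11]"
    by (rule distinct_level_nbrs[OF Y(7), of 2]) (simp_all add: lev N14 mk_p1_def)
  moreover have "distinct [v6, v15]"
    by (rule distinct_level_nbrs[OF Y(1), of 2]) (simp_all add: lev N7 mk_p1_def)
  ultimately have v6: "v6 \<noteq> v11" "v6 \<noteq> v15" by auto
  have v6_v2: "v6 \<noteq> v2"
    using no_two_level_3_nbrs[OF L3(1) L3(2)[symmetric] Y(4) lev(3) adj_sym[OF Y(6,4) e(3)]]
      adj_sym[OF Y(7,3) e(5)] by auto
  obtain v4 where v4: "v4 \<in> level_nbrs v3 5" using level_nbr_exists[OF Y(8), of 5] lev
    by (auto simp: mk_p1_def)
  then have "v4 \<in> level 5" by simp
  moreover have "card (level 5) = 1" using card_level[of 5] by (simp add: mk_valency_def)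
  then obtain x where "level 5 = {x}" by (rule card_1_singletonE)
  ultimately have L5: "level 5 = {v4}" by (metis singletonD)
  obtain v5 where v5: "v5 \<in> level_nbrs v6 4" using level_nbr_exists[OF Y(3), of 4] lev
    by (auto simp: mk_p1_def)
  then have Y5: "v5 \<in> Y" "c v6 v5 = 1" "c v5 y0 = 4" by simp_all
  obtain w where "w \<in> level_nbrs v5 5" using level_nbr_exists[OF Y5(1), of 5] Y5
    by (auto simp: mk_p1_def)
  then have e5_4: "c v5 v4 = 1" using L5 by (auto simp: set_eq_iff)
  have v6N5: "v6 \<in> level_nbrs v5 2" using Y lev adj_sym[OF Y(3) Y5(1,2)] by simp
  obtain z where N5: "level_nbrs v5 2 = {v6, z}" "z \<noteq> v6"
    by (rule level_nbrs_pair[OF Y5(1) _ v6N5]) (simp add: Y5 mk_p1_def)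
  have "z \<in> level_nbrs v5 2" using N5(1) by simp
  then have Yz: "z \<in> Y" "c v5 z = 1" "c z y0 = 2" by simp_all
  obtain t where t: "t \<in> level_nbrs z 3" using level_nbr_exists[OF Yz(1), of 3] Yz
    by (auto simp: mk_p1_def)
  have "t \<noteq> v14"
  proof
    assume "t = v14"
    then have "v6 = z"
      using common_nbr_unique[OF Y5(1) Y(7) _ Y(3) Yz(1) adj_sym[OF Y(3) Y5(1,2)]
          adj_sym[OF Y(7,3) e(5)] Yz(2)]
        t Y5(3) lev(5) by fastforce
    then show False using N5(2) by simp
  qed
  moreover have "t \<in> level 3" using t by simp
  then have "t \<in> {v10, v14}" by (simp only: L3(1))
  ultimately have "z \<in> level_nbrs v10 2" using t Yz adj_sym[OF Yz(1) Y(6)] by auto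
  then have "z \<in> {v2, v13, v15}" by (simp only: N10)
  moreover have "z \<noteq> v15"
  proof
    assume "z = v15"
    then have "c v15 v5 = 1" using adj_sym[OF Y5(1) Yz(1,2)] by simp
    then have "v15 = v6"
      using common_nbr_unique[OF Y(1) Y5(1) _ Y(2,3) e(1) _ e(2) Y5(2)]
        lev(1) Y5(3) by fastforce
    then show False using v6(2) by simp
  qed
  moreover have "z \<noteq> v2"
  proof
    assume "z = v2"
    then have "v5 = v3"
      using level_nbrs_unique[OF Y(4), of 4 v5 v3] adj_sym[OF Y5(1) Yz(1,2)] Y5 Y(8) e(6) lev
      by (simp add: mk_p1_def)
    then have "v6 \<in> {v2, v11}" using v6N5 by (simp only: N3)
    then show False using v6 v6_v2 by auto
  qed
  ultimately have "z = v13" by simp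
  then show thesis using that[OF L5 _ e5_4] v4 N5(1) Y5 by simp
qed

lemma level_4_configuration:
  assumes v1: "v1 \<in> level 1" and N1: "level_nbrs v1 2 = {v2, v9}" "v9 \<noteq> v2"
    and L3: "level 3 = {v10, v14}" "v14 \<noteq> v10"
    and N10: "level_nbrs v10 2 = {v2, v13, v15}" and N14: "level_nbrs v14 2 = {v6, v9, v11}"
    and v3: "v3 \<in> level 4" and N3: "level_nbrs v3 2 = {v2, v11}"
    and v5: "v5 \<in> level 4" and N5: "level_nbrs v5 2 = {v6, v13}"
    and L5: "level 5 = {v4}" and e3_4: "c v3 v4 = 1" and e5_4: "c v5 v4 = 1"
  obtains v12 where "level_nbrs v12 2 = {v9, v15}" "level_nbrs v4 4 = {v3, v5, v12}"
proof -
  have "v2 \<in> level_nbrs v10 2" "v13 \<in> level_nbrs v10 2" "v6 \<in> level_nbrs v14 2"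
    "v9 \<in> level_nbrs v14 2"
    "v9 \<in> level_nbrs v1 2" "v2 \<in> level_nbrs v1 2" "v6 \<in> level_nbrs v5 2" "v13 \<in> level_nbrs v5 2"
    "v10 \<in> level 3" "v14 \<in> level 3" "v4 \<in> level 5"
    using N10 N14 N1(1) N5 L3(1) L5 by simp_all
  then have Y: "v1 \<in> Y" "v2 \<in> Y" "v9 \<in> Y" "v13 \<in> Y" "v6 \<in> Y" "v10 \<in> Y" "v14 \<in> Y" "v4 \<in> Y" "v3 \<in> Y"
    "v5 \<in> Y"
    and lev: "c v1 y0 = 1" "c v9 y0 = 2" "c v10 y0 = 3" "c v14 y0 = 3" "c v13 y0 = 2" "c v6 y0 = 2"
      "c v2 y0 = 2"
      "c v3 y0 = 4" "c v5 y0 = 4" "c v4 y0 = 5"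
    and e: "c v1 v9 = 1" "c v10 v2 = 1" "c v10 v13 = 1" "c v14 v9 = 1" "c v14 v6 = 1" "c v5 v13 = 1"
      "c v1 v2 = 1"
    using v1 v3 v5 by simp_all
  have not_both_level_3: False if "z \<in> Y" "c z y0 = 2" "c z v10 = 1" "c z v14 = 1" for z
    using no_two_level_3_nbrs[OF L3(1) L3(2)[symmetric] that] .
  have "distinct [v6, v9, v11]"
    by (rule distinct_level_nbrs[OF Y(7), of 2]) (simp_all add: lev N14 mk_p1_def)
  then have v9: "v9 \<noteq> v6" "v9 \<noteq> v11" "v6 \<noteq> v11" by auto
  have v9_v13: "v9 \<noteq> v13" and v6_v2: "v6 \<noteq> v2"
    using not_both_level_3[OF Y(3) lev(2)] not_both_level_3[OF Y(5) lev(6)]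
      adj_sym[OF Y(6,2) e(2)] adj_sym[OF Y(6,4) e(3)]
      adj_sym[OF Y(7,3) e(4)] adj_sym[OF Y(7,5) e(5)] by auto
  obtain v12 where "v12 \<in> level_nbrs v9 4" using level_nbr_exists[OF Y(3), of 4] lev
    by (auto simp: mk_p1_def)
  then have Y12: "v12 \<in> Y" "c v9 v12 = 1" "c v12 y0 = 4" by simp_all
  obtain w where "w \<in> level_nbrs v12 5" using level_nbr_exists[OF Y12(1), of 5] Y12
    by (auto simp: mk_p1_def)
  then have e12_4: "c v12 v4 = 1" using L5 by (auto simp: set_eq_iff)
  have v9N12: "v9 \<in> level_nbrs v12 2" using Y lev adj_sym[OF Y(3) Y12(1,2)] by simp
  obtain z where N12: "level_nbrs v12 2 = {v9, z}" "z \<noteq> v9"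
    by (rule level_nbrs_pair[OF Y12(1) _ v9N12]) (simp add: Y12 mk_p1_def)
  have "z \<in> level_nbrs v12 2" using N12(1) by simp
  then have Yz: "z \<in> Y" "c v12 z = 1" "c z y0 = 2" by simp_all
  obtain t where t: "t \<in> level_nbrs z 3" using level_nbr_exists[OF Yz(1), of 3] Yz
    by (auto simp: mk_p1_def)
  have "t \<noteq> v14"
  proof
    assume "t = v14"
    then have "v9 = z"
      using common_nbr_unique[OF Y12(1) Y(7) _ Y(3) Yz(1) adj_sym[OF Y(3) Y12(1,2)]
          adj_sym[OF Y(7,3) e(4)] Yz(2)]
        t Y12(3) lev(4) by fastforce
    then show False using N12(2) by simp
  qed
  moreover have "t \<in> level 3" using t by simp
  then have "t \<in> {v10, v14}" by (simp only: L3(1))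
  ultimately have "z \<in> level_nbrs v10 2" using t Yz adj_sym[OF Yz(1) Y(6)] by auto
  then have "z \<in> {v2, v13, v15}" by (simp only: N10)
  moreover have "z \<noteq> v2"
  proof
    assume "z = v2"
    then have "c v2 v12 = 1" using adj_sym[OF Y12(1) Yz(1,2)] by simp
    then have "v2 = v9"
      using common_nbr_unique[OF Y(1) Y12(1) _ Y(2,3) e(7) _ e(1) Y12(2)] lev(1) Y12(3)
      by fastforce
    then show False using N1(2) by simp
  qed
  moreover have "z \<noteq> v13"
  proof
    assume "z = v13"
    then have "v12 = v5"
      using level_nbrs_unique[OF Y(4), of 4 v12 v5]
        adj_sym[OF Y12(1) Yz(1,2)] adj_sym[OF Y(10,4) e(6)]
        Y12 Y(10) lev by (simp add: mk_p1_def)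
    then have "v9 \<in> {v6, v13}" using v9N12 by (simp only: N5)
    then show False using v9 v9_v13 by auto
  qed
  ultimately have N12': "level_nbrs v12 2 = {v9, v15}" using N12(1) by auto
  have "v3 \<noteq> v5" "v3 \<noteq> v12" "v5 \<noteq> v12"
    using \<open>v6 \<in> level_nbrs v5 2\<close> v9N12 N3 N5 N12' v9 v9_v13 v6_v2 N1(2) by auto
  then have "level_nbrs v4 4 = {v3, v5, v12}"
    using adj_sym[OF Y(9,8) e3_4] adj_sym[OF Y(10,8) e5_4] adj_sym[OF Y12(1) Y(8) e12_4] Y Y12 lev
    by (intro level_nbrs_eq_triple[OF Y(8)]) (simp_all add: mk_p1_def)
  with N12' show thesis by (rule that)
qed

lemma configuration_embedding:
  assumes N0: "level_nbrs y0 1 = {v1, v7, v8}"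
    and N1: "level_nbrs v1 2 = {v2, v9}" and N7: "level_nbrs v7 2 = {v6, v15}"
    and N8: "level_nbrs v8 2 = {v11, v13}"
    and N10: "level_nbrs v10 2 = {v2, v13, v15}" and N14: "level_nbrs v14 2 = {v6, v9, v11}"
    and N3: "level_nbrs v3 2 = {v2, v11}" and N5: "level_nbrs v5 2 = {v6, v13}"
    and N12: "level_nbrs v12 2 = {v9, v15}" and N4: "level_nbrs v4 4 = {v3, v5, v12}"
    and L3: "level 3 = {v10, v14}" "v14 \<noteq> v10" and L5: "level 5 = {v4}"
  defines "vs \<equiv> [y0, v1, v2, v3, v4, v5, v6, v7, v8, v9, v10, v11, v12, v13, v14, v15]"
  shows "set vs \<subseteq> Y" and "distinct vs"
    and "\<And>x y. x < 16 \<Longrightarrow> y < 16 \<Longrightarrow> mk_rel x y = 1 \<Longrightarrow> c (vs ! x) (vs ! y) = 1"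
proof -
  have m: "v1 \<in> level_nbrs y0 1" "v7 \<in> level_nbrs y0 1" "v8 \<in> level_nbrs y0 1"
    "v2 \<in> level_nbrs v1 2" "v9 \<in> level_nbrs v1 2" "v6 \<in> level_nbrs v7 2" "v15 \<in> level_nbrs v7 2"
    "v11 \<in> level_nbrs v8 2" "v13 \<in> level_nbrs v8 2"
    "v2 \<in> level_nbrs v10 2" "v13 \<in> level_nbrs v10 2" "v15 \<in> level_nbrs v10 2"
    "v6 \<in> level_nbrs v14 2" "v9 \<in> level_nbrs v14 2" "v11 \<in> level_nbrs v14 2"
    "v2 \<in> level_nbrs v3 2" "v11 \<in> level_nbrs v3 2" "v6 \<in> level_nbrs v5 2" "v13 \<in> level_nbrs v5 2"
    "v9 \<in> level_nbrs v12 2" "v15 \<in> level_nbrs v12 2"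
    "v3 \<in> level_nbrs v4 4" "v5 \<in> level_nbrs v4 4" "v12 \<in> level_nbrs v4 4"
    "v10 \<in> level 3" "v14 \<in> level 3" "v4 \<in> level 5"
    using N0 N1 N7 N8 N10 N14 N3 N5 N12 N4 L3(1) L5 by simp_all
  then have Y: "v1 \<in> Y" "v2 \<in> Y" "v3 \<in> Y" "v4 \<in> Y" "v5 \<in> Y" "v6 \<in> Y" "v7 \<in> Y" "v8 \<in> Y"
      "v9 \<in> Y" "v10 \<in> Y" "v11 \<in> Y" "v12 \<in> Y" "v13 \<in> Y" "v14 \<in> Y" "v15 \<in> Y"
    and lev: "c y0 y0 = 0" "c v1 y0 = 1" "c v7 y0 = 1" "c v8 y0 = 1"
      "c v2 y0 = 2" "c v6 y0 = 2" "c v9 y0 = 2" "c v11 y0 = 2" "c v13 y0 = 2" "c v15 y0 = 2"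
      "c v10 y0 = 3" "c v14 y0 = 3" "c v3 y0 = 4" "c v5 y0 = 4" "c v12 y0 = 4" "c v4 y0 = 5"
    and edge: "c y0 v1 = 1" "c y0 v7 = 1" "c y0 v8 = 1" "c v1 v2 = 1" "c v1 v9 = 1" "c v7 v6 = 1"
      "c v7 v15 = 1" "c v8 v11 = 1" "c v8 v13 = 1" "c v10 v2 = 1" "c v10 v13 = 1" "c v10 v15 = 1"
      "c v14 v6 = 1" "c v14 v9 = 1" "c v14 v11 = 1" "c v3 v2 = 1" "c v3 v11 = 1" "c v5 v6 = 1"
      "c v5 v13 = 1" "c v12 v9 = 1" "c v12 v15 = 1" "c v4 v3 = 1" "c v4 v5 = 1" "c v4 v12 = 1"
    using assoc_scheme_eq_0_iff[OF scheme y0 y0] by simp_all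
  show "set vs \<subseteq> Y" using Y y0 by (simp add: vs_def)
  have vsY: "vs ! x \<in> Y" if "x < 16" for x
    using \<open>set vs \<subseteq> Y\<close> nth_mem[of x vs] that by (auto simp: vs_def)
  have L1: "distinct [v1, v7, v8]"
    using N0 by (intro distinct_level_nbrs[OF y0, of 1]) (simp_all add: lev mk_p1_def)
  moreover have "distinct [v2, v9]"
    by (rule distinct_level_nbrs[OF Y(1), of 2]) (simp_all add: lev N1 mk_p1_def)
  moreover have "distinct [v6, v15]"
    by (rule distinct_level_nbrs[OF Y(7), of 2]) (simp_all add: lev N7 mk_p1_def)
  moreover have "distinct [v11, v13]"
    by (rule distinct_level_nbrs[OF Y(8), of 2]) (simp_all add: lev N8 mk_p1_def)
  moreover have "distinct [v3, v5, v12]"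
    by (rule distinct_level_nbrs[OF Y(4), of 4]) (simp_all add: lev N4 mk_p1_def)
  moreover have "level_nbrs v1 2 \<inter> level_nbrs v7 2 = {}" "level_nbrs v1 2 \<inter> level_nbrs v8 2 = {}"
    "level_nbrs v7 2 \<inter> level_nbrs v8 2 = {}"
    using level_nbrs_disjoint[OF Y(1) Y(7) _ lev(2,3)] level_nbrs_disjoint[OF Y(1) Y(8) _ lev(2,4)]
      level_nbrs_disjoint[OF Y(7) Y(8) _ lev(3,4)] L1 by (simp_all add: mk_p1_def)
  ultimately have neq: "v1 \<noteq> v7" "v1 \<noteq> v8" "v7 \<noteq> v8" "v2 \<noteq> v9" "v6 \<noteq> v15" "v11 \<noteq> v13"
    "v3 \<noteq> v5" "v3 \<noteq> v12" "v5 \<noteq> v12" "v2 \<noteq> v6" "v2 \<noteq> v15" "v9 \<noteq> v6" "v9 \<noteq> v15"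
    "v2 \<noteq> v11" "v2 \<noteq> v13" "v9 \<noteq> v11" "v9 \<noteq> v13" "v6 \<noteq> v11" "v6 \<noteq> v13" "v15 \<noteq> v11"
    "v15 \<noteq> v13" "v10 \<noteq> v14"
    using L3(2) unfolding N1 N7 N8 by auto
  have level_vs: "\<forall>x<16. c (vs ! x) y0 = mk_rel x 0"
    unfolding all_less_iff_list_all by (simp add: upt_rec vs_def lev mk_rel_def)
  have same_level: "\<forall>x<16. \<forall>y<16. mk_rel x 0 = mk_rel y 0 \<longrightarrow> x \<noteq> y \<longrightarrow> vs ! x \<noteq> vs ! y"
    unfolding all_less_iff_list_all by (simp add: upt_rec vs_def mk_rel_def neq neq[THEN not_sym])
  show "distinct vs"
  proof (unfold distinct_conv_nth, intro allI impI)
    fix x y assume "x < length vs" "y < length vs" "x \<noteq> y"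
    moreover have "length vs = 16" by (simp add: vs_def)
    ultimately have xy: "x < 16" "y < 16" "x \<noteq> y" by simp_all
    show "vs ! x \<noteq> vs ! y"
    proof
      assume "vs ! x = vs ! y"
      then have "mk_rel x 0 = mk_rel y 0" using level_vs xy by metis
      then show False using same_level xy \<open>vs ! x = vs ! y\<close> by blast
    qed
  qed
  have edges: "\<forall>x<16. \<forall>y<16. mk_rel x y = 1 \<longrightarrow> x < y \<longrightarrow>
      c (vs ! x) (vs ! y) = 1 \<or> c (vs ! y) (vs ! x) = 1"
    unfolding all_less_iff_list_all by (simp add: upt_rec vs_def mk_rel_def edge)
  fix x y assume xy: "x < 16" "y < 16" "mk_rel x y = 1"
  then consider "x < y" | "y < x" using mk_rel_eq_0_iff[of x x] by (fastforce simp: gp_vertices_8)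
  then show "c (vs ! x) (vs ! y) = 1"
  proof cases
    case 1
    then have "c (vs ! x) (vs ! y) = 1 \<or> c (vs ! y) (vs ! x) = 1" using edges xy by blast
    then show ?thesis using adj_sym[OF vsY[OF xy(2)] vsY[OF xy(1)]] by blast
  next
    case 2
    moreover have "mk_rel y x = 1" using mk_rel_sym[of x y] xy by (simp add: gp_vertices_8)
    ultimately have "c (vs ! y) (vs ! x) = 1 \<or> c (vs ! x) (vs ! y) = 1" using edges xy by blast
    then show ?thesis using adj_sym[OF vsY[OF xy(2)] vsY[OF xy(1)]] by blast
  qed
qed

theorem graph_isomorphism:
  obtains f where "bij_betw f (gp_vertices 8) Y"
    "\<And>x y. x \<in> gp_vertices 8 \<Longrightarrow> y \<in> gp_vertices 8 \<Longrightarrow> c (f x) (f y) = 1 \<longleftrightarrow> mk_rel x y = 1"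
proof -
  obtain v1 v7 v8 v2 v9 v3 v11 v10 v14 where A:
    "level_nbrs y0 1 = {v1, v7, v8}" "v8 \<noteq> v1" "level_nbrs v1 2 = {v2, v9}" "v9 \<noteq> v2"
    "level 3 = {v10, v14}" "v14 \<noteq> v10" "c v2 v10 = 1" "c v11 v14 = 1"
    "v3 \<in> level_nbrs v2 4" "level_nbrs v3 2 = {v2, v11}" "v11 \<in> level_nbrs v8 2"
    by (rule base_configuration)
  obtain v6 v13 v15 where B:
    "level_nbrs v8 2 = {v11, v13}" "level_nbrs v7 2 = {v6, v15}"
    "level_nbrs v10 2 = {v2, v13, v15}" "level_nbrs v14 2 = {v6, v9, v11}"
    by (rule level_3_configuration[OF A(1-8,11)])
  have "v1 \<in> level_nbrs y0 1" "v7 \<in> level_nbrs y0 1" using A(1) by simp_all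
  then have lev: "v1 \<in> level 1" "v7 \<in> level 1" "v3 \<in> level 4" using A(9) by simp_all
  obtain v4 v5 where C:
    "level 5 = {v4}" "c v3 v4 = 1" "c v5 v4 = 1" "v5 \<in> level 4" "level_nbrs v5 2 = {v6, v13}"
    by (rule antipodal_configuration[OF lev(2) B(2) A(5,6) B(3,4) A(9,10)])
  obtain v12 where D: "level_nbrs v12 2 = {v9, v15}" "level_nbrs v4 4 = {v3, v5, v12}"
    by (rule level_4_configuration[OF lev(1) A(3,4) A(5,6) B(3,4) lev(3) A(10) C(4,5) C(1-3)])
  define vs where "vs = [y0, v1, v2, v3, v4, v5, v6, v7, v8, v9, v10, v11, v12, v13, v14, v15]"
  note emb = configuration_embedding[OF A(1,3) B(2,1,3,4) A(10) C(5) D A(5,6) C(1), folded vs_def]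
  have X: "gp_vertices 8 = {0..<16}" "card (gp_vertices 8) = card Y"
    by (simp_all add: gp_vertices_8 card_Y)
  have len: "length vs = 16" by (simp add: vs_def)
  have "inj_on ((!) vs) (gp_vertices 8)"
    using emb(2) len unfolding X(1) by (simp add: inj_on_nth)
  moreover have "(!) vs ` gp_vertices 8 \<subseteq> Y"
    using emb(1) nth_mem[of _ vs] len unfolding X(1) by auto
  moreover have "card {y\<in>gp_vertices 8. mk_rel x y = 1} = 3" if "x \<in> gp_vertices 8" for x
    using valency_eq_card[OF mk_scheme that, of 1] mk_valency[of 1] by (simp add: mk_valency_def)
  ultimately show thesis
    using regular_graph_embedding[of "gp_vertices 8" Y "(!) vs"
    "\<lambda>x y. mk_rel x y = 1" 3 "\<lambda>u v. c u v = 1"]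
      X degree emb(3) assoc_scheme_finite[OF scheme] that unfolding X(1) by auto
qed

end

section \<open>Schemes with the diagram of the Moebius-Kantor scheme\<close>

lemma generated_scheme_gp83:
  assumes "generated_scheme (gp_vertices 8) (gp_adj 8 3) d r"
  obtains g where "d = 5" "bij_betw g {0..5} {0..5}" "g 1 = 1"
    "\<And>x y. x \<in> gp_vertices 8 \<Longrightarrow> y \<in> gp_vertices 8 \<Longrightarrow> mk_rel x y = g (r x y)"
proof -
  have r: "assoc_scheme (gp_vertices 8) d r"
    and adj: "\<And>x y. x \<in> gp_vertices 8 \<Longrightarrow> y \<in> gp_vertices 8 \<Longrightarrow> r x y = 1 \<longleftrightarrow> gp_adj 8 3 x y"
    using assms by (simp_all add: generated_scheme_def)
  have minimal: "\<forall>d'' r''. assoc_scheme (gp_vertices 8) d'' r'' \<and>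
      (\<exists>i\<le>d''. \<forall>x\<in>gp_vertices 8. \<forall>y\<in>gp_vertices 8. r'' x y = i \<longleftrightarrow> gp_adj 8 3 x y) \<longrightarrow> d \<le> d''"
    using assms unfolding generated_scheme_def by (elim conjE) assumption
  have "\<exists>i\<le>5. \<forall>x\<in>gp_vertices 8. \<forall>y\<in>gp_vertices 8. mk_rel x y = i \<longleftrightarrow> gp_adj 8 3 x y"
    using mk_rel_eq_1_iff by (intro exI[of _ 1]) simp
  then have "d \<le> 5" by (rule minimal[rule_format, OF conjI[OF mk_scheme]])
  then show thesis using gp83_scheme_relabels_mk_rel[OF r _ adj] that by blast
qed

lemma mk_diagram_of_same_diagram:
  assumes r: "assoc_scheme (gp_vertices 8) 5 r" and g: "bij_betw g {0..5} {0..5}" "g 1 = 1"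
    and rg: "\<And>x y. x \<in> gp_vertices 8 \<Longrightarrow> y \<in> gp_vertices 8 \<Longrightarrow> mk_rel x y = g (r x y)"
    and r': "assoc_scheme Y 5 r'" and diagram: "same_rd_diagram (gp_vertices 8) 5 r Y 5 r'"
    and y0: "y0 \<in> Y"
  obtains \<pi> where "bij_betw \<pi> {0..5} {0..5}" "\<pi> 1 = 1" "mk_diagram Y (\<lambda>u v. \<pi> (r' u v)) y0"
proof -
  obtain \<sigma> where \<sigma>: "bij_betw \<sigma> {0..5} {0..5}" "\<sigma> 0 = 0" "\<sigma> 1 = 1"
    and val: "\<And>i. i \<le> 5 \<Longrightarrow> valency (gp_vertices 8) r i = valency Y r' (\<sigma> i)"
    and p1: "\<And>i j. i \<le> 5 \<Longrightarrow> j \<le> 5 \<Longrightarrow> inter_num (gp_vertices 8) r i 1 j = inter_num Y r' (\<sigma> i) 1 (\<sigma> j)"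
    using diagram unfolding same_rd_diagram_def by auto
  have g0: "g 0 = 0"
    using rg[of 0 0] assoc_scheme_eq_0_iff[OF r, of 0 0] by (simp add: gp_vertices_8 mk_rel_def)
  define \<pi> where "\<pi> = g \<circ> inv_into {0..5} \<sigma>"
  have \<pi>: "bij_betw \<pi> {0..5} {0..5}"
    unfolding \<pi>_def by (rule bij_betw_trans[OF bij_betw_inv_into[OF \<sigma>(1)] g(1)])
  have \<pi>\<sigma>: "\<pi> (\<sigma> i) = g i" if "i \<le> 5" for i
    using \<sigma>(1) that by (simp add: \<pi>_def bij_betw_def)
  have \<pi>0: "\<pi> 0 = 0" using \<pi>\<sigma>[of 0] \<sigma>(2) g0 by simp
  have g_surj: "\<exists>i\<le>5. g i = h" if "h \<le> 5" for h
    using g(1) that by (force simp: bij_betw_def)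
  let ?c = "\<lambda>u v. \<pi> (r' u v)"
  have "mk_diagram Y ?c y0"
  proof
    show "assoc_scheme Y 5 ?c" by (rule assoc_scheme_relabel[OF r' \<pi> \<pi>0])
    show "y0 \<in> Y" by (fact y0)
  next
    fix h j :: nat assume hj: "h \<le> 5" "j \<le> 5"
    then obtain i j' where ij: "i \<le> 5" "j' \<le> 5" "g i = h" "g j' = j" using g_surj by blast
    have "inter_num Y ?c (\<pi> (\<sigma> i)) (\<pi> (\<sigma> 1)) (\<pi> (\<sigma> j')) = inter_num Y r' (\<sigma> i) (\<sigma> 1) (\<sigma> j')"
      using ij \<sigma>(1) by (intro inter_num_relabel[OF r' \<pi> \<pi>0]) (auto simp: bij_betw_def)
    also have "\<dots> = inter_num (gp_vertices 8) mk_rel (g i) (g 1) (g j')"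
      using p1[OF ij(1,2)] inter_num_relabel[OF r g(1) g0 rg ij(1) _ ij(2), of 1] \<sigma>(3) by simp
    finally show "inter_num Y ?c h 1 j = mk_p1 h j"
      using ij \<pi>\<sigma>[of 1] \<pi>\<sigma>[of i] \<pi>\<sigma>[of j'] \<sigma>(3) g(2) mk_inter_num[OF hj] by simp
  next
    fix k :: nat assume k: "k \<le> 5"
    then obtain k' where k': "k' \<le> 5" "g k' = k" using g_surj by blast
    have "valency Y ?c (\<pi> (\<sigma> k')) = valency Y r' (\<sigma> k')"
      using k' \<sigma>(1) by (intro valency_relabel[OF r' \<pi> \<pi>0]) (auto simp: bij_betw_def)
    also have "\<dots> = valency (gp_vertices 8) mk_rel (g k')"
      using val[OF k'(1)] valency_relabel[OF r g(1) g0 rg k'(1)] by simp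
    finally show "valency Y ?c k = mk_valency k"
      using k' \<pi>\<sigma>[of k'] mk_valency[OF k] by simp
  qed
  then show thesis using that \<pi> \<pi>\<sigma>[of 1] \<sigma>(3) g(2) by simp
qed

lemma scheme_iso_gp83:
  assumes r: "assoc_scheme (gp_vertices 8) 5 r" and g: "bij_betw g {0..5} {0..5}" "g 1 = 1"
    and rg: "\<And>x y. x \<in> gp_vertices 8 \<Longrightarrow> y \<in> gp_vertices 8 \<Longrightarrow> mk_rel x y = g (r x y)"
    and r': "assoc_scheme Y 5 r'" and f: "bij_betw f (gp_vertices 8) Y"
    and adj: "\<And>x y. x \<in> gp_vertices 8 \<Longrightarrow> y \<in> gp_vertices 8 \<Longrightarrow> r' (f x) (f y) = 1 \<longleftrightarrow> gp_adj 8 3 x y"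
  shows "scheme_iso (gp_vertices 8) 5 r Y 5 r'"
proof -
  obtain g' where g': "bij_betw g' {0..5} {0..5}" "g' 1 = 1"
    and sg: "\<And>x y. x \<in> gp_vertices 8 \<Longrightarrow> y \<in> gp_vertices 8 \<Longrightarrow> mk_rel x y = g' (r' (f x) (f y))"
    using gp83_scheme_relabels_mk_rel[OF assoc_scheme_pullback[OF r' f] order.refl adj] by blast
  define \<tau> where "\<tau> = inv_into {0..5} g' \<circ> g"
  have "bij_betw \<tau> {0..5} {0..5}"
    unfolding \<tau>_def by (rule bij_betw_trans[OF g(1) bij_betw_inv_into[OF g'(1)]])
  moreover have "\<tau> 1 = 1"
    using g'(2) g(2) inv_into_f_f[OF bij_betw_imp_inj_on[OF g'(1)], of 1] by (simp add: \<tau>_def)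
  moreover have "r' (f x) (f y) = \<tau> (r x y)" if "x \<in> gp_vertices 8" "y \<in> gp_vertices 8" for x y
    using rg[OF that] sg[OF that]
      assoc_scheme_le[OF r' bij_betw_apply[OF f that(1)] bij_betw_apply[OF f that(2)]]
      inv_into_f_f[OF bij_betw_imp_inj_on[OF g'(1)], of "r' (f x) (f y)"] by (simp add: \<tau>_def)
  ultimately show ?thesis
    unfolding scheme_iso_def using f by blast
qed

theorem proposition3p2:
  fixes r :: "nat \<Rightarrow> nat \<Rightarrow> nat" and Y :: "'b set" and r' :: "'b \<Rightarrow> 'b \<Rightarrow> nat"
  assumes "generated_scheme (gp_vertices 8) (gp_adj 8 3) d r"
    and "assoc_scheme Y d' r'"
    and "same_rd_diagram (gp_vertices 8) d r Y d' r'"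
  shows "scheme_iso (gp_vertices 8) d r Y d' r'"
proof -
  obtain g where d: "d = 5" and g: "bij_betw g {0..5} {0..5}" "g 1 = 1"
    and rg: "\<And>x y. x \<in> gp_vertices 8 \<Longrightarrow> y \<in> gp_vertices 8 \<Longrightarrow> mk_rel x y = g (r x y)"
    using generated_scheme_gp83[OF assms(1)] by blast
  have r: "assoc_scheme (gp_vertices 8) 5 r" using assms(1) d by (simp add: generated_scheme_def)
  have d': "d' = 5" using assms(3) d by (simp add: same_rd_diagram_def)
  have r': "assoc_scheme Y 5 r'" and diagram: "same_rd_diagram (gp_vertices 8) 5 r Y 5 r'"
    using assms(2,3) d d' by simp_all
  obtain y0 where "y0 \<in> Y" using assoc_scheme_surj[OF r', of 0] by auto
  obtain \<pi> where \<pi>: "bij_betw \<pi> {0..5} {0..5}" "\<pi> 1 = 1"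
    and diag: "mk_diagram Y (\<lambda>u v. \<pi> (r' u v)) y0"
    by (rule mk_diagram_of_same_diagram[OF r g rg r' diagram \<open>y0 \<in> Y\<close>])
  obtain f where f: "bij_betw f (gp_vertices 8) Y"
    and fe: "\<And>x y. x \<in> gp_vertices 8 \<Longrightarrow> y \<in> gp_vertices 8 \<Longrightarrow> \<pi> (r' (f x) (f y)) = 1 \<longleftrightarrow> mk_rel x y = 1"
    using mk_diagram.graph_isomorphism[OF diag] by blast
  have "r' (f x) (f y) = 1 \<longleftrightarrow> gp_adj 8 3 x y" if "x \<in> gp_vertices 8" "y \<in> gp_vertices 8" for x y
  proof -
    have "r' (f x) (f y) \<le> 5"
      using assoc_scheme_le[OF r' bij_betw_apply[OF f that(1)] bij_betw_apply[OF f that(2)]] .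
    then have "\<pi> (r' (f x) (f y)) = \<pi> 1 \<longleftrightarrow> r' (f x) (f y) = 1"
      using inj_on_eq_iff[OF bij_betw_imp_inj_on[OF \<pi>(1)]] by simp
    then show ?thesis using fe[OF that] mk_rel_eq_1_iff[OF that] \<pi>(2) by simp
  qed
  then show ?thesis using scheme_iso_gp83[OF r g rg r' f] d d' by simp
qed

end
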